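(* Let $\mathbb{F}$ be a field of characteristic $0$, $p,q>1$ integers with $p\neq q$, and $\mathcal{J}_{\mathbb{F}}$ the Jordan triple system of all $p\times q$ matrices over $\mathbb{F}$ with triple product $\{x,y,z\}=xy^tz+zy^tx$. Then the universal associative envelope $\mathcal{U}(\mathcal{J}_{\mathbb{F}})$ is semisimple.
   Context: Put $\Omega_1=\{1,\dots,p\}$, $\Omega_2=\{1,\dots,q\}$, and let $E_{i,j}$ be the standard matrix units of $M_{p\times q}(\mathbb{F})$. Let $\mathfrak{F}$ be the free associative algebra (without identity element) over $\mathbb{F}$ on symbols $G_{i,j}$ ($i\in\Omega_1$, $j\in\Omega_2$), and $\Phi:\mathcal{J}_{\mathbb{F}}\to\mathfrak{F}$ the linear map with $\Phi(E_{i,j})=G_{i,j}$. Let $I$ be the two-sided ideal generated by all $G_{i,j}G_{k,\ell}G_{s,t}+G_{s,t}G_{k,\ell}G_{i,j}-\Phi(\{E_{i,j},E_{k,\ell},E_{s,t}\})$. The universal associative envelope is $\mathcal{U}(\mathcal{J}_{\mathbb{F}})=\mathfrak{F}/I$. *)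

theory Defs
  imports Main
begin

text \<open>p x q matrices over 'a are functions nat => nat => 'a; only entries with
  row index in {1..p} and column index in {1..q} are used.\<close>

definition matunit :: "nat \<Rightarrow> nat \<Rightarrow> nat \<Rightarrow> nat \<Rightarrow> 'a::field" where
  "matunit i j = (\<lambda>a b. if a = i \<and> b = j then 1 else 0)"

definition mtrans :: "(nat \<Rightarrow> nat \<Rightarrow> 'a) \<Rightarrow> nat \<Rightarrow> nat \<Rightarrow> 'a" where
  "mtrans y = (\<lambda>a b. y b a)"

definition mmul :: "nat \<Rightarrow> (nat \<Rightarrow> nat \<Rightarrow> 'a::field) \<Rightarrow> (nat \<Rightarrow> nat \<Rightarrow> 'a) \<Rightarrow> nat \<Rightarrow> nat \<Rightarrow> 'a" where
  "mmul n A B = (\<lambda>a c. \<Sum>b\<in>{1..n}. A a b * B b c)"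

definition madd :: "(nat \<Rightarrow> nat \<Rightarrow> 'a::field) \<Rightarrow> (nat \<Rightarrow> nat \<Rightarrow> 'a) \<Rightarrow> nat \<Rightarrow> nat \<Rightarrow> 'a" where
  "madd A B = (\<lambda>a b. A a b + B a b)"

definition jtriple :: "nat \<Rightarrow> nat \<Rightarrow> (nat \<Rightarrow> nat \<Rightarrow> 'a::field) \<Rightarrow> (nat \<Rightarrow> nat \<Rightarrow> 'a)
    \<Rightarrow> (nat \<Rightarrow> nat \<Rightarrow> 'a) \<Rightarrow> nat \<Rightarrow> nat \<Rightarrow> 'a" where
  "jtriple p q x y z =
     madd (mmul p (mmul q x (mtrans y)) z) (mmul p (mmul q z (mtrans y)) x)"

text \<open>Elements of the free algebra are finitely supported functions from words
  over the generators to 'a, vanishing on the empty word (no identity).\<close>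

definition gens :: "nat \<Rightarrow> nat \<Rightarrow> (nat \<times> nat) set" where
  "gens p q = {1..p} \<times> {1..q}"

definition freealg :: "nat \<Rightarrow> nat \<Rightarrow> ((nat \<times> nat) list \<Rightarrow> 'a::field) set" where
  "freealg p q = {f. finite {w. f w \<noteq> 0} \<and>
                      (\<forall>w. f w \<noteq> 0 \<longrightarrow> w \<noteq> [] \<and> set w \<subseteq> gens p q)}"

definition fzero :: "(nat \<times> nat) list \<Rightarrow> 'a::field" where
  "fzero = (\<lambda>w. 0)"

definition fadd :: "((nat \<times> nat) list \<Rightarrow> 'a::field) \<Rightarrow> ((nat \<times> nat) list \<Rightarrow> 'a) \<Rightarrow> (nat \<times> nat) list \<Rightarrow> 'a" where
  "fadd f g = (\<lambda>w. f w + g w)"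

definition fsub :: "((nat \<times> nat) list \<Rightarrow> 'a::field) \<Rightarrow> ((nat \<times> nat) list \<Rightarrow> 'a) \<Rightarrow> (nat \<times> nat) list \<Rightarrow> 'a" where
  "fsub f g = (\<lambda>w. f w - g w)"

definition fsmult :: "'a::field \<Rightarrow> ((nat \<times> nat) list \<Rightarrow> 'a) \<Rightarrow> (nat \<times> nat) list \<Rightarrow> 'a" where
  "fsmult c f = (\<lambda>w. c * f w)"

definition fmul :: "((nat \<times> nat) list \<Rightarrow> 'a::field) \<Rightarrow> ((nat \<times> nat) list \<Rightarrow> 'a) \<Rightarrow> (nat \<times> nat) list \<Rightarrow> 'a" where
  "fmul f g = (\<lambda>w. \<Sum>k\<in>{0..length w}. f (take k w) * g (drop k w))"

definition G :: "nat \<Rightarrow> nat \<Rightarrow> (nat \<times> nat) list \<Rightarrow> 'a::field" where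
  "G i j = (\<lambda>w. if w = [(i, j)] then 1 else 0)"

definition Phi :: "nat \<Rightarrow> nat \<Rightarrow> (nat \<Rightarrow> nat \<Rightarrow> 'a::field) \<Rightarrow> (nat \<times> nat) list \<Rightarrow> 'a" where
  "Phi p q X = (\<lambda>w. \<Sum>i\<in>{1..p}. \<Sum>j\<in>{1..q}. X i j * G i j w)"

definition envrels :: "nat \<Rightarrow> nat \<Rightarrow> ((nat \<times> nat) list \<Rightarrow> 'a::field) set" where
  "envrels p q = {fsub (fadd (fmul (fmul (G i j) (G k l)) (G s t))
                              (fmul (fmul (G s t) (G k l)) (G i j)))
                        (Phi p q (jtriple p q (matunit i j) (matunit k l) (matunit s t)))
                  | i j k l s t. i \<in> {1..p} \<and> j \<in> {1..q} \<and> k \<in> {1..p} \<and> l \<in> {1..q}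
                                 \<and> s \<in> {1..p} \<and> t \<in> {1..q}}"

inductive_set ideal_gen :: "nat \<Rightarrow> nat \<Rightarrow> ((nat \<times> nat) list \<Rightarrow> 'a::field) set
    \<Rightarrow> ((nat \<times> nat) list \<Rightarrow> 'a) set" for p q S where
  base: "s \<in> S \<Longrightarrow> s \<in> ideal_gen p q S"
| zero: "fzero \<in> ideal_gen p q S"
| add: "x \<in> ideal_gen p q S \<Longrightarrow> y \<in> ideal_gen p q S \<Longrightarrow> fadd x y \<in> ideal_gen p q S"
| smult: "x \<in> ideal_gen p q S \<Longrightarrow> fsmult c x \<in> ideal_gen p q S"
| lmul: "a \<in> freealg p q \<Longrightarrow> x \<in> ideal_gen p q S \<Longrightarrow> fmul a x \<in> ideal_gen p q S"
| rmul: "a \<in> freealg p q \<Longrightarrow> x \<in> ideal_gen p q S \<Longrightarrow> fmul x a \<in> ideal_gen p q S"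

definition envideal :: "nat \<Rightarrow> nat \<Rightarrow> ((nat \<times> nat) list \<Rightarrow> 'a::field) set" where
  "envideal p q = ideal_gen p q (envrels p q)"

text \<open>Jacobson radical of the (not necessarily unital) algebra F/I, via
  Jacobson's quasi-regularity characterisation: the class of z lies in the radical
  iff z a is right quasi-regular modulo I for every a, i.e. there is w with
  za + w - (za)w in I. Semisimple means the radical is zero, i.e. every such z
  lies in I.\<close>

definition in_quot_radical :: "nat \<Rightarrow> nat \<Rightarrow> ((nat \<times> nat) list \<Rightarrow> 'a::field) set
    \<Rightarrow> ((nat \<times> nat) list \<Rightarrow> 'a) \<Rightarrow> bool" where
  "in_quot_radical p q I z \<longleftrightarrow>
     (\<forall>a\<in>freealg p q. \<exists>w\<in>freealg p q.
        fsub (fadd (fmul z a) w) (fmul (fmul z a) w) \<in> I)"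

definition quot_semisimple :: "nat \<Rightarrow> nat \<Rightarrow> ((nat \<times> nat) list \<Rightarrow> 'a::field) set \<Rightarrow> bool" where
  "quot_semisimple p q I \<longleftrightarrow>
     (\<forall>z\<in>freealg p q. in_quot_radical p q I z \<longrightarrow> z \<in> I)"

definition universal_envelope_semisimple :: "'a::field itself \<Rightarrow> nat \<Rightarrow> nat \<Rightarrow> bool" where
  "universal_envelope_semisimple (_ :: 'a itself) p q \<longleftrightarrow>
     quot_semisimple p q (envideal p q :: ((nat \<times> nat) list \<Rightarrow> 'a) set)"

end

theory Submission
  imports Defs
begin

text \<open>Sending the generator \<open>G i j\<close> to the symmetric matrix \<open>E(i, p+j) + E(p+j, i)\<close> of size
  \<open>p + q\<close> respects the defining relations, so it gives a representation of \<open>U\<close> on column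
  vectors of length \<open>p + q\<close>. Conversely, using only the relations, the squares of the generators are
  idempotent modulo \<open>I\<close>, and products of generators and their squares multiply like the matrix
  units \<open>E(a, b)\<close>; every monomial is congruent to the combination of these elements whose
  coefficients are the entries of its representing matrix. If \<open>z\<close> lies in the radical and its
  matrix has a nonzero entry at \<open>(a, b)\<close>, then \<open>z\<close> times a multiple of \<open>E(b, a)\<close> acts as
  the identity on the \<open>a\<close>-th coordinate and so cannot be right quasi-regular. Hence the matrix of
  \<open>z\<close> vanishes, and \<open>z\<close> lies in \<open>I\<close>.\<close>

subsection \<open>The free algebra\<close>

text \<open>All coefficient functions, not only the finitely supported ones, so that the type is a
  \<open>ring_1\<close> and identities can be proved by \<open>algebra_simps\<close>; the free algebra \<open>freealg p q\<close>
  is a subset.\<close>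

typedef ('a::field) ncseries = "UNIV :: ((nat \<times> nat) list \<Rightarrow> 'a) set"
  morphisms ncoeff ncseries by simp

setup_lifting type_definition_ncseries

lemma ncoeff_ncseries [simp]: "ncoeff (ncseries f) = f"
  by (simp add: ncseries_inverse)

definition fconst :: "'a::field \<Rightarrow> (nat \<times> nat) list \<Rightarrow> 'a" where
  "fconst c = (\<lambda>w. if w = [] then c else 0)"

lemma fmul_fconst_left: "fmul (fconst c) f = fsmult c f"
proof (rule ext)
  fix w :: "(nat \<times> nat) list"
  have "fmul (fconst c) f w = (\<Sum>k\<in>{0..length w}. if k = 0 then c * f w else 0)"
    unfolding fmul_def fconst_def by (rule sum.cong) auto
  then show "fmul (fconst c) f w = fsmult c f w" by (simp add: fsmult_def)
qed

lemma fmul_fconst_right: "fmul f (fconst c) = fsmult c f"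
proof (rule ext)
  fix w :: "(nat \<times> nat) list"
  have "fmul f (fconst c) w = (\<Sum>k\<in>{0..length w}. if k = length w then c * f w else 0)"
    unfolding fmul_def fconst_def by (rule sum.cong) auto
  then show "fmul f (fconst c) w = fsmult c f w" by (simp add: fsmult_def)
qed

lemma fmul_assoc: "fmul (fmul f g) h = fmul f (fmul g h)"
proof (rule ext)
  fix w :: "(nat \<times> nat) list"
  define L where "L = length w"
  define A where "A = (\<lambda>m n. f (take m w) * g (take n (drop m w)) * h (drop (m + n) w))"
  have "fmul (fmul f g) h w = (\<Sum>k\<le>L. \<Sum>m\<le>k. A m (k - m))"
    unfolding fmul_def A_def L_def atLeast0AtMost
    by (auto simp: sum_distrib_right min_def take_drop intro!: sum.cong)
  also have "\<dots> = (\<Sum>(m,n)\<in>{(m,n). m + n \<le> L}. A m n)"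
    by (rule sum.triangle_reindex_eq[symmetric])
  also have "\<dots> = (\<Sum>m\<le>L. \<Sum>n\<le>L - m. A m n)"
  proof -
    have "{(m,n). m + n \<le> L} = Sigma {..L} (\<lambda>m. {..L - m})" by auto
    then show ?thesis by (simp add: sum.Sigma)
  qed
  also have "\<dots> = fmul f (fmul g h) w"
    unfolding fmul_def A_def L_def atLeast0AtMost
    by (auto simp: sum_distrib_left mult.assoc add.commute intro!: sum.cong)
  finally show "fmul (fmul f g) h w = fmul f (fmul g h) w" .
qed

instantiation ncseries :: (field) ring_1
begin
lift_definition zero_ncseries :: "'a ncseries" is fzero .
lift_definition one_ncseries :: "'a ncseries" is "fconst 1" .
lift_definition plus_ncseries :: "'a ncseries \<Rightarrow> 'a ncseries \<Rightarrow> 'a ncseries" is fadd .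
lift_definition minus_ncseries :: "'a ncseries \<Rightarrow> 'a ncseries \<Rightarrow> 'a ncseries" is fsub .
lift_definition uminus_ncseries :: "'a ncseries \<Rightarrow> 'a ncseries" is "fsmult (-1)" .
lift_definition times_ncseries :: "'a ncseries \<Rightarrow> 'a ncseries \<Rightarrow> 'a ncseries" is fmul .
instance
proof
  fix a b c :: "'a ncseries"
  show "a * b * c = a * (b * c)" by transfer (rule fmul_assoc)
  show "a + b + c = a + (b + c)" by transfer (auto simp: fadd_def algebra_simps)
  show "a + b = b + a" by transfer (auto simp: fadd_def algebra_simps)
  show "0 + a = a" by transfer (auto simp: fadd_def fzero_def)
  show "- a + a = 0" by transfer (auto simp: fadd_def fsmult_def fzero_def)
  show "a - b = a + - b" by transfer (auto simp: fadd_def fsub_def fsmult_def)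
  show "(a + b) * c = a * c + b * c"
    by transfer (auto simp: fadd_def fmul_def algebra_simps sum.distrib)
  show "a * (b + c) = a * b + a * c"
    by transfer (auto simp: fadd_def fmul_def algebra_simps sum.distrib)
  show "1 * a = a" by transfer (simp add: fmul_fconst_left fsmult_def)
  show "a * 1 = a" by transfer (simp add: fmul_fconst_right fsmult_def)
  show "(0::'a ncseries) \<noteq> 1" by transfer (simp add: fzero_def fconst_def fun_eq_iff)
qed
end

lift_definition scal :: "'a::field \<Rightarrow> 'a ncseries" is fconst .

lemma ncoeff_add: "ncoeff (x + y) = fadd (ncoeff x) (ncoeff y)" by transfer simp
lemma ncoeff_diff: "ncoeff (x - y) = fsub (ncoeff x) (ncoeff y)" by transfer simp
lemma ncoeff_mult: "ncoeff (x * y) = fmul (ncoeff x) (ncoeff y)" by transfer simp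
lemma ncoeff_zero: "ncoeff 0 = fzero" by transfer simp
lemma ncoeff_uminus: "ncoeff (- x) = fsmult (-1) (ncoeff x)" by transfer simp
lemma ncoeff_scal_mult: "ncoeff (scal c * x) = fsmult c (ncoeff x)"
  by transfer (rule fmul_fconst_left)

lemma ncoeff_sum: "ncoeff (sum f A) w = (\<Sum>x\<in>A. ncoeff (f x) w)"
  by (induction A rule: infinite_finite_induct) (auto simp: ncoeff_zero ncoeff_add fzero_def fadd_def)

lemma scal_mult_commute: "scal c * x = x * scal c"
  by transfer (simp add: fmul_fconst_left fmul_fconst_right)

lemma scal_mult: "scal (c * d) = scal c * scal d"
  by transfer (unfold fmul_fconst_left, simp add: fsmult_def fconst_def fun_eq_iff)

lemma scal_add: "scal (c + d) = scal c + scal d"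
  by transfer (simp add: fadd_def fconst_def fun_eq_iff)

lemma scal_one: "scal 1 = 1" by transfer simp

lemma scal_zero: "scal 0 = 0" by transfer (simp add: fconst_def fzero_def)

lemma scal_sum: "scal (sum f A) = (\<Sum>x\<in>A. scal (f x))"
  by (induction A rule: infinite_finite_induct) (auto simp: scal_zero scal_add)

lemma mult_scal_left_commute: "x * (scal c * y) = scal c * (x * y)"
  by (metis mult.assoc scal_mult_commute)

lemma fmul_nonzero_split:
  assumes "fmul f g w \<noteq> 0"
  obtains u v where "w = u @ v" "f u \<noteq> 0" "g v \<noteq> 0"
proof -
  from assms obtain k where "k \<in> {0..length w}" "f (take k w) * g (drop k w) \<noteq> 0"
    unfolding fmul_def by (meson sum.neutral)
  then show ?thesis by (intro that[of "take k w" "drop k w"]) auto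
qed

lemma freealg_finite_support: "f \<in> freealg p q \<Longrightarrow> finite {w. f w \<noteq> 0}"
  by (simp add: freealg_def)

lemma freealg_fmul:
  assumes "f \<in> freealg p q" "g \<in> freealg p q"
  shows "fmul f g \<in> freealg p q"
proof -
  let ?Sf = "{w. f w \<noteq> 0}" and ?Sg = "{w. g w \<noteq> 0}"
  have "{w. fmul f g w \<noteq> 0} \<subseteq> (\<lambda>(u,v). u @ v) ` (?Sf \<times> ?Sg)"
    by (auto elim!: fmul_nonzero_split)
  moreover have "finite ((\<lambda>(u,v). u @ v) ` (?Sf \<times> ?Sg))"
    using assms by (simp add: freealg_finite_support)
  ultimately have "finite {w. fmul f g w \<noteq> 0}" by (rule finite_subset)
  moreover have "w \<noteq> [] \<and> set w \<subseteq> gens p q" if "fmul f g w \<noteq> 0" for w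
    using that assms by (elim fmul_nonzero_split) (auto simp: freealg_def)
  ultimately show ?thesis unfolding freealg_def by blast
qed

lemma freealg_fadd:
  assumes "f \<in> freealg p q" "g \<in> freealg p q"
  shows "fadd f g \<in> freealg p q"
proof -
  have "{w. fadd f g w \<noteq> 0} \<subseteq> {w. f w \<noteq> 0} \<union> {w. g w \<noteq> 0}"
    by (auto simp: fadd_def)
  then show ?thesis using assms unfolding freealg_def
    by (auto simp: fadd_def intro: finite_subset)
qed

lemma freealg_fsmult: "f \<in> freealg p q \<Longrightarrow> fsmult c f \<in> freealg p q"
  unfolding freealg_def fsmult_def by (auto elim!: rev_finite_subset)

lemma freealg_fzero: "fzero \<in> freealg p q"
  by (simp add: freealg_def fzero_def)

lemma fsub_eq_fadd_fsmult: "fsub f g = fadd f (fsmult (-1) g)"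
  by (simp add: fsub_def fadd_def fsmult_def fun_eq_iff)

lemma freealg_fsub: "f \<in> freealg p q \<Longrightarrow> g \<in> freealg p q \<Longrightarrow> fsub f g \<in> freealg p q"
  unfolding fsub_eq_fadd_fsmult by (intro freealg_fadd freealg_fsmult)

lemma G_in_freealg: "i \<in> {1..p} \<Longrightarrow> j \<in> {1..q} \<Longrightarrow> G i j \<in> freealg p q"
  by (auto simp: freealg_def G_def gens_def)

lemma Phi_in_freealg: "Phi p q X \<in> freealg p q"
proof -
  have supp: "{w. Phi p q X w \<noteq> 0} \<subseteq> (\<lambda>x. [x]) ` gens p q"
  proof
    fix w assume "w \<in> {w. Phi p q X w \<noteq> 0}"
    then obtain i j where "i \<in> {1..p}" "j \<in> {1..q}" "X i j * G i j w \<noteq> 0"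
      unfolding Phi_def by (metis (mono_tags, lifting) mem_Collect_eq sum.neutral)
    then show "w \<in> (\<lambda>x. [x]) ` gens p q" by (auto simp: G_def gens_def split: if_splits)
  qed
  moreover have "finite (gens p q)" by (simp add: gens_def)
  ultimately show ?thesis unfolding freealg_def by (auto intro: finite_subset)
qed

lemma envrels_subset_freealg: "envrels p q \<subseteq> freealg p q"
  unfolding envrels_def
  by (auto intro!: freealg_fsub freealg_fadd freealg_fmul G_in_freealg Phi_in_freealg)

lemma ideal_gen_subset_freealg:
  assumes "S \<subseteq> freealg p q"
  shows "ideal_gen p q S \<subseteq> freealg p q"
proof
  fix x assume "x \<in> ideal_gen p q S"
  then show "x \<in> freealg p q"
    by induction (use assms in \<open>auto intro: freealg_fadd freealg_fsmult freealg_fmul freealg_fzero\<close>)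
qed

lemma mmul_matunit_left:
  assumes "k \<in> {1..n}"
  shows "mmul n (matunit i k) B = (\<lambda>a d. if a = i then B k d else (0::'a::field))"
proof (intro ext)
  fix a d
  have "mmul n (matunit i k) B a d
      = (\<Sum>b\<in>{1..n}. if b = k then (if a = i then B k d else 0) else 0)"
    unfolding mmul_def matunit_def by (rule sum.cong) auto
  then show "mmul n (matunit i k) B a d = (if a = i then B k d else 0)"
    using assms by (simp add: sum.delta')
qed

lemma mmul_matunit_right:
  assumes "k \<in> {1..n}"
  shows "mmul n A (matunit k t) = (\<lambda>a d. if d = t then A a k else (0::'a::field))"
proof (intro ext)
  fix a d
  have "mmul n A (matunit k t) a d
      = (\<Sum>b\<in>{1..n}. if b = k then (if d = t then A a k else 0) else 0)"
    unfolding mmul_def matunit_def by (rule sum.cong) auto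
  then show "mmul n A (matunit k t) a d = (if d = t then A a k else 0)"
    using assms by (simp add: sum.delta')
qed

lemma jtriple_matunit:
  assumes "i \<in> {1..p}" "k \<in> {1..p}" "s \<in> {1..p}" "j \<in> {1..q}" "l \<in> {1..q}" "t \<in> {1..q}"
  shows "jtriple p q (matunit i j) (matunit k l) (matunit s t) =
    (\<lambda>a d. (if a = i \<and> d = t \<and> j = l \<and> k = s then (1::'a::field) else 0) +
           (if a = s \<and> d = j \<and> l = t \<and> k = i then 1 else 0))"
  unfolding jtriple_def madd_def
  using assms by (simp only: mmul_matunit_right mmul_matunit_left) (auto simp: mtrans_def matunit_def fun_eq_iff)

lemma Phi_madd: "Phi p q (madd X Y) = fadd (Phi p q X) (Phi p q Y)"
  by (simp add: Phi_def madd_def fadd_def distrib_right sum.distrib fun_eq_iff)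

lemma Phi_delta:
  assumes "i \<in> {1..p}" "t \<in> {1..q}"
  shows "Phi p q (\<lambda>a d. if a = i \<and> d = t \<and> P then 1 else 0)
      = (if P then G i t else (fzero::_ \<Rightarrow> 'a::field))"
proof (rule ext)
  fix w
  have "Phi p q (\<lambda>a d. if a = i \<and> d = t \<and> P then (1::'a) else 0) w =
      (\<Sum>a\<in>{1..p}. \<Sum>d\<in>{1..q}. if d = t then (if a = i then (if P then G i t w else 0) else 0) else (0::'a))"
    unfolding Phi_def by (intro sum.cong refl) auto
  also have "\<dots> = (if P then G i t else fzero) w"
    using assms by (simp add: sum.delta' fzero_def)
  finally show "Phi p q (\<lambda>a d. if a = i \<and> d = t \<and> P then (1::'a) else 0) w
      = (if P then G i t else fzero) w" .
qed

lemma Phi_jtriple_matunit: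
  assumes "i \<in> {1..p}" "k \<in> {1..p}" "s \<in> {1..p}" "j \<in> {1..q}" "l \<in> {1..q}" "t \<in> {1..q}"
  shows "Phi p q (jtriple p q (matunit i j) (matunit k l) (matunit s t)) =
    fadd (if j = l \<and> k = s then G i t else fzero) (if l = t \<and> k = i then G s j else (fzero::_ \<Rightarrow> 'a::field))"
proof -
  have "jtriple p q (matunit i j) (matunit k l) (matunit s t) =
      madd (\<lambda>a d. if a = i \<and> d = t \<and> (j = l \<and> k = s) then 1 else 0)
           (\<lambda>a d. if a = s \<and> d = j \<and> (l = t \<and> k = i) then (1::'a) else 0)"
    using assms by (simp add: jtriple_matunit madd_def conj_assoc)
  then show ?thesis using assms by (simp only: Phi_madd Phi_delta)
qed

subsection \<open>The representation on column vectors of length p + q\<close>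

text \<open>Vectors are functions \<open>nat \<Rightarrow> 'a\<close> indexed by \<open>{1..p+q}\<close>; the generator \<open>G i j\<close> acts
  as the symmetric matrix \<open>E(i, p+j) + E(p+j, i)\<close>.\<close>

definition rep_gen :: "nat \<Rightarrow> nat \<times> nat \<Rightarrow> (nat \<Rightarrow> 'a::field) \<Rightarrow> nat \<Rightarrow> 'a" where
  "rep_gen p x v =
    (\<lambda>c. if c = fst x then v (p + snd x) else if c = p + snd x then v (fst x) else 0)"

fun rep_word :: "nat \<Rightarrow> (nat \<times> nat) list \<Rightarrow> (nat \<Rightarrow> 'a::field) \<Rightarrow> nat \<Rightarrow> 'a" where
  "rep_word p [] v = v"
| "rep_word p (x # w) v = rep_gen p x (rep_word p w v)"

definition rep :: "nat \<Rightarrow> ((nat \<times> nat) list \<Rightarrow> 'a::field) \<Rightarrow> (nat \<Rightarrow> 'a) \<Rightarrow> nat \<Rightarrow> 'a" where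
  "rep p f v = (\<lambda>c. \<Sum>w\<in>{w. f w \<noteq> 0}. f w * rep_word p w v c)"

definition basis_vec :: "nat \<Rightarrow> nat \<Rightarrow> 'a::field" where
  "basis_vec b = (\<lambda>c. if c = b then 1 else 0)"

lemma rep_word_add:
  "rep_word p w (\<lambda>c. V c + U c) = (\<lambda>c. rep_word p w V c + rep_word p w U c)"
  by (induction w) (auto simp: rep_gen_def)

lemma rep_word_scale: "rep_word p w (\<lambda>c. a * V c) = (\<lambda>c. a * rep_word p w V c)"
  by (induction w) (auto simp: rep_gen_def)

lemma rep_word_zero: "rep_word p w (\<lambda>c. 0) = (\<lambda>c. 0)"
  by (induction w) (auto simp: rep_gen_def)

lemma rep_word_sum:
  "finite K \<Longrightarrow> rep_word p w (\<lambda>c. \<Sum>k\<in>K. a k * V k c)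
      = (\<lambda>c. \<Sum>k\<in>K. a k * rep_word p w (V k) c)"
  by (induction K rule: finite_induct) (simp_all add: rep_word_zero rep_word_add rep_word_scale)

lemma rep_word_append: "rep_word p (u @ w) v = rep_word p u (rep_word p w v)"
  by (induction u) auto

lemma rep_eq_sum_superset:
  assumes "finite S" "{w. f w \<noteq> 0} \<subseteq> S"
  shows "rep p f v c = (\<Sum>w\<in>S. f w * rep_word p w v c)"
  unfolding rep_def using assms by (intro sum.mono_neutral_left) auto

lemma rep_fadd:
  assumes "finite {w. f w \<noteq> 0}" "finite {w. g w \<noteq> 0}"
  shows "rep p (fadd f g) v c = rep p f v c + rep p g v c"
proof -
  let ?S = "{w. f w \<noteq> 0} \<union> {w. g w \<noteq> 0}"
  have "rep p (fadd f g) v c = (\<Sum>w\<in>?S. fadd f g w * rep_word p w v c)"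
    by (rule rep_eq_sum_superset) (use assms in \<open>auto simp: fadd_def\<close>)
  also have "\<dots> = (\<Sum>w\<in>?S. f w * rep_word p w v c) + (\<Sum>w\<in>?S. g w * rep_word p w v c)"
    by (simp add: fadd_def distrib_right sum.distrib)
  also have "\<dots> = rep p f v c + rep p g v c"
    using assms by (simp add: rep_eq_sum_superset[of ?S])
  finally show ?thesis .
qed

lemma rep_fsmult:
  assumes "finite {w. f w \<noteq> 0}"
  shows "rep p (fsmult k f) v c = k * rep p f v c"
proof -
  have "rep p (fsmult k f) v c = (\<Sum>w\<in>{w. f w \<noteq> 0}. fsmult k f w * rep_word p w v c)"
    by (rule rep_eq_sum_superset) (use assms in \<open>auto simp: fsmult_def\<close>)
  then show ?thesis by (simp add: rep_def fsmult_def sum_distrib_left mult.assoc)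
qed

lemma rep_fsub:
  assumes "finite {w. f w \<noteq> 0}" "finite {w. g w \<noteq> 0}"
  shows "rep p (fsub f g) v c = rep p f v c - rep p g v c"
proof -
  have "finite {w. fsmult (-1) g w \<noteq> 0}"
    using assms(2) by (rule rev_finite_subset) (auto simp: fsmult_def)
  then show ?thesis using assms by (simp add: fsub_eq_fadd_fsmult rep_fadd rep_fsmult)
qed

lemma rep_fzero: "rep p fzero v c = 0"
  by (simp add: rep_def fzero_def)

lemma rep_scale_vec: "rep p f (\<lambda>c. a * V c) c' = a * rep p f V c'"
  by (simp add: rep_def rep_word_scale sum_distrib_left algebra_simps)

lemma rep_zero_vec: "rep p f (\<lambda>c. 0) c' = 0"
  by (simp add: rep_def rep_word_zero)

lemma rep_G: "rep p (G i j) v = rep_gen p (i, j) v"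
proof -
  have "{w. G i j w \<noteq> (0::'a)} = {[(i,j)]}" by (auto simp: G_def)
  then show ?thesis by (simp add: rep_def G_def fun_eq_iff)
qed

lemma fmul_eq_sum_splits:
  assumes "finite Sf" "finite Sg" "{w. f w \<noteq> 0} \<subseteq> Sf" "{w. g w \<noteq> 0} \<subseteq> Sg"
  shows "fmul f g x = (\<Sum>uw\<in>{uw \<in> Sf \<times> Sg. fst uw @ snd uw = x}. f (fst uw) * g (snd uw))"
proof -
  let ?K = "{k \<in> {0..length x}. (take k x, drop k x) \<in> Sf \<times> Sg}"
  have "fmul f g x = (\<Sum>k\<in>?K. f (take k x) * g (drop k x))"
    unfolding fmul_def using assms by (intro sum.mono_neutral_right) auto
  also have "\<dots> = (\<Sum>uw\<in>{uw \<in> Sf \<times> Sg. fst uw @ snd uw = x}. f (fst uw) * g (snd uw))"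
    by (rule sum.reindex_bij_witness[where i="\<lambda>uw. length (fst uw)" and j="\<lambda>k. (take k x, drop k x)"])
       auto
  finally show ?thesis .
qed

lemma rep_fmul:
  assumes "finite {w. f w \<noteq> 0}" "finite {w. g w \<noteq> 0}"
  shows "rep p (fmul f g) v = rep p f (rep p g v)"
proof
  fix c
  define Sf where "Sf = {w. f w \<noteq> 0}"
  define Sg where "Sg = {w. g w \<noteq> 0}"
  define S where "S = (\<lambda>uw. fst uw @ snd uw) ` (Sf \<times> Sg)"
  have fin: "finite Sf" "finite Sg" "finite S" using assms by (auto simp: Sf_def Sg_def S_def)
  have supp: "{w. fmul f g w \<noteq> 0} \<subseteq> S"
    by (auto simp: S_def Sf_def Sg_def elim!: fmul_nonzero_split intro!: image_eqI[where x="(u, v)" for u v])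
  have "rep p (fmul f g) v c = (\<Sum>x\<in>S. fmul f g x * rep_word p x v c)"
    by (rule rep_eq_sum_superset[OF fin(3) supp])
  also have "\<dots> = (\<Sum>x\<in>S. \<Sum>uw\<in>{uw \<in> Sf \<times> Sg. fst uw @ snd uw = x}.
                      f (fst uw) * g (snd uw) * rep_word p (fst uw @ snd uw) v c)"
    by (intro sum.cong refl) (simp add: fmul_eq_sum_splits[OF fin(1,2)] Sf_def Sg_def sum_distrib_right)
  also have "\<dots> = (\<Sum>uw\<in>Sf \<times> Sg. f (fst uw) * g (snd uw) * rep_word p (fst uw @ snd uw) v c)"
    by (rule sum.group) (use fin in \<open>auto simp: S_def\<close>)
  also have "\<dots> = (\<Sum>u\<in>Sf. \<Sum>w\<in>Sg. f u * g w * rep_word p (u @ w) v c)"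
    by (simp add: sum.cartesian_product case_prod_beta)
  also have "\<dots> = (\<Sum>u\<in>Sf. f u * rep_word p u (\<lambda>c. \<Sum>w\<in>Sg. g w * rep_word p w v c) c)"
    by (simp add: rep_word_sum fin rep_word_append sum_distrib_left mult.assoc)
  also have "\<dots> = rep p f (rep p g v) c"
    by (simp add: rep_def Sf_def Sg_def)
  finally show "rep p (fmul f g) v c = rep p f (rep p g v) c" .
qed

lemma rep_gen_triple:
  assumes "i \<in> {1..p}" "k \<in> {1..p}" "s \<in> {1..p}" "j \<in> {1..q}" "l \<in> {1..q}" "t \<in> {1..q}"
  shows "rep_gen p (i,j) (rep_gen p (k,l) (rep_gen p (s,t) v)) c
           + rep_gen p (s,t) (rep_gen p (k,l) (rep_gen p (i,j) v)) c =
    (if j = l \<and> k = s then rep_gen p (i,t) v c else 0)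
      + (if l = t \<and> k = i then rep_gen p (s,j) v c else (0::'a::field))"
  using assms by (auto simp: rep_gen_def)

lemma rep_envrels:
  assumes "x \<in> envrels p q"
  shows "rep p x v c = (0::'a::field)"
proof -
  from assms obtain i j k l s t where r: "i \<in> {1..p}" "k \<in> {1..p}" "s \<in> {1..p}"
      "j \<in> {1..q}" "l \<in> {1..q}" "t \<in> {1..q}"
    and x: "x = fsub (fadd (fmul (fmul (G i j) (G k l)) (G s t)) (fmul (fmul (G s t) (G k l)) (G i j)))
                     (Phi p q (jtriple p q (matunit i j) (matunit k l) (matunit s t)))"
    unfolding envrels_def by blast
  have fin: "finite {w. f w \<noteq> 0}" if "f \<in> freealg p q" for f :: "_ \<Rightarrow> 'a"
    using that by (rule freealg_finite_support)
  have G_if: "(if P then G a b else fzero) \<in> freealg p q" if "a \<in> {1..p}" "b \<in> {1..q}" for P a b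
    using that by (simp add: G_in_freealg freealg_fzero)
  have rep_if: "rep p (if P then G a b else fzero) v c
      = (if P then rep_gen p (a, b) v c else 0)" for P a b
    by (simp add: rep_G rep_fzero)
  have "rep p x v c =
        (rep_gen p (i,j) (rep_gen p (k,l) (rep_gen p (s,t) v)) c
           + rep_gen p (s,t) (rep_gen p (k,l) (rep_gen p (i,j) v)) c)
      - ((if j = l \<and> k = s then rep_gen p (i,t) v c else 0)
           + (if l = t \<and> k = i then rep_gen p (s,j) v c else 0))"
    unfolding x Phi_jtriple_matunit[OF r] using r
    by (simp add: rep_fsub rep_fadd rep_fmul rep_G rep_if fin freealg_fmul freealg_fadd G_if
        G_in_freealg del: if_split_asm split del: if_split)
  then show ?thesis by (simp only: rep_gen_triple[OF r] diff_self)
qed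

lemma rep_envideal:
  assumes "x \<in> envideal p q"
  shows "rep p x v c = (0::'a::field)"
proof -
  have fin: "finite {w. f w \<noteq> 0}" if "f \<in> freealg p q" for f :: "_ \<Rightarrow> 'a"
    using that by (rule freealg_finite_support)
  have free: "f \<in> freealg p q" if "f \<in> ideal_gen p q (envrels p q)" for f :: "_ \<Rightarrow> 'a"
    using that ideal_gen_subset_freealg[OF envrels_subset_freealg] by blast
  have "\<forall>v c. rep p x v c = 0"
    using assms unfolding envideal_def
  proof induction
    case (base s)
    then show ?case by (auto intro: rep_envrels)
  next
    case zero
    then show ?case by (simp add: rep_fzero)
  next
    case (add x y)
    then show ?case by (simp add: rep_fadd fin free)
  next
    case (smult x c)
    then show ?case by (simp add: rep_fsmult fin free)
  next
    case (lmul a x)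
    then have "rep p x v = (\<lambda>c. 0)" for v by (simp add: fun_eq_iff)
    with lmul show ?case by (simp add: rep_fmul fin free rep_zero_vec)
  next
    case (rmul a x)
    then show ?case by (simp add: rep_fmul fin free)
  qed
  then show ?thesis by blast
qed

locale rect_env =
  fixes p q :: nat
  assumes p_gt_1: "1 < p" and q_gt_1: "1 < q"
begin

definition in_free :: "'a::field ncseries \<Rightarrow> bool" where
  "in_free x \<longleftrightarrow> ncoeff x \<in> freealg p q"

definition in_ideal :: "'a::field ncseries \<Rightarrow> bool" where
  "in_ideal x \<longleftrightarrow> ncoeff x \<in> envideal p q"

definition congr :: "'a::field ncseries \<Rightarrow> 'a ncseries \<Rightarrow> bool" (infix "\<approx>" 50) where
  "x \<approx> y \<longleftrightarrow> in_ideal (x - y)"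

definition g :: "nat \<Rightarrow> nat \<Rightarrow> 'a::field ncseries" where
  "g i j = (if i \<in> {1..p} \<and> j \<in> {1..q} then ncseries (G i j) else 0)"

abbreviation row :: "nat \<Rightarrow> bool" where "row i \<equiv> i \<in> {1..p}"
abbreviation col :: "nat \<Rightarrow> bool" where "col j \<equiv> j \<in> {1..q}"

lemma in_free_add [simp]: "in_free x \<Longrightarrow> in_free y \<Longrightarrow> in_free (x + y)"
  unfolding in_free_def by (simp add: ncoeff_add freealg_fadd)

lemma in_free_mult [simp]: "in_free x \<Longrightarrow> in_free y \<Longrightarrow> in_free (x * y)"
  unfolding in_free_def by (simp add: ncoeff_mult freealg_fmul)

lemma in_free_scal_mult [simp]: "in_free x \<Longrightarrow> in_free (scal c * x)"
  unfolding in_free_def by (simp add: ncoeff_scal_mult freealg_fsmult)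

lemma in_free_zero [simp]: "in_free 0"
  unfolding in_free_def by (simp add: ncoeff_zero freealg_fzero)

lemma in_free_g [simp]: "in_free (g i j)"
  unfolding g_def by (auto simp: in_free_def ncoeff_zero freealg_fzero intro: G_in_freealg)

lemma in_ideal_add: "in_ideal x \<Longrightarrow> in_ideal y \<Longrightarrow> in_ideal (x + y)"
  unfolding in_ideal_def envideal_def by (simp add: ncoeff_add ideal_gen.add)

lemma in_ideal_scal_mult: "in_ideal x \<Longrightarrow> in_ideal (scal c * x)"
  unfolding in_ideal_def envideal_def by (simp add: ncoeff_scal_mult ideal_gen.smult)

lemma in_ideal_uminus: "in_ideal x \<Longrightarrow> in_ideal (- x)"
  unfolding in_ideal_def envideal_def by (simp add: ncoeff_uminus ideal_gen.smult)

lemma in_ideal_diff: "in_ideal x \<Longrightarrow> in_ideal y \<Longrightarrow> in_ideal (x - y)"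
  by (metis diff_conv_add_uminus in_ideal_add in_ideal_uminus)

lemma in_ideal_zero: "in_ideal 0"
  unfolding in_ideal_def envideal_def by (simp add: ncoeff_zero ideal_gen.zero)

lemma in_ideal_mult_left: "in_free a \<Longrightarrow> in_ideal x \<Longrightarrow> in_ideal (a * x)"
  unfolding in_ideal_def in_free_def envideal_def by (simp add: ncoeff_mult ideal_gen.lmul)

lemma in_ideal_mult_right: "in_free a \<Longrightarrow> in_ideal x \<Longrightarrow> in_ideal (x * a)"
  unfolding in_ideal_def in_free_def envideal_def by (simp add: ncoeff_mult ideal_gen.rmul)

lemma in_ideal_sum: "(\<And>x. x \<in> A \<Longrightarrow> in_ideal (f x)) \<Longrightarrow> in_ideal (sum f A)"
  by (induction A rule: infinite_finite_induct) (auto intro: in_ideal_zero in_ideal_add)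

lemma in_ideal_half:
  assumes "in_ideal (x + x :: 'a::field_char_0 ncseries)"
  shows "in_ideal x"
proof -
  have "x = scal (1/2) * (x + x)"
    by (simp add: distrib_left scal_one flip: distrib_right scal_add)
  then show ?thesis using in_ideal_scal_mult[OF assms, of "1/2"] by simp
qed

lemma congr_refl [simp]: "x \<approx> x"
  by (simp add: congr_def in_ideal_zero)

lemma congr_sym: "x \<approx> y \<Longrightarrow> y \<approx> x"
  unfolding congr_def by (metis in_ideal_uminus minus_diff_eq)

lemma congr_trans [trans]: "x \<approx> y \<Longrightarrow> y \<approx> z \<Longrightarrow> x \<approx> z"
  using in_ideal_add[of "x - y" "y - z"] by (simp add: congr_def)

lemma congr_add: "x \<approx> y \<Longrightarrow> x' \<approx> y' \<Longrightarrow> x + x' \<approx> y + y'"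
  using in_ideal_add[of "x - y" "x' - y'"] by (simp add: congr_def algebra_simps)

lemma congr_diff: "x \<approx> y \<Longrightarrow> x' \<approx> y' \<Longrightarrow> x - x' \<approx> y - y'"
  using in_ideal_diff[of "x - y" "x' - y'"] by (simp add: congr_def algebra_simps)

lemma congr_mult_left: "x \<approx> y \<Longrightarrow> in_free u \<Longrightarrow> u * x \<approx> u * y"
  unfolding congr_def by (metis in_ideal_mult_left right_diff_distrib)

lemma congr_mult_right: "x \<approx> y \<Longrightarrow> in_free u \<Longrightarrow> x * u \<approx> y * u"
  unfolding congr_def by (metis in_ideal_mult_right left_diff_distrib)

lemma congr_mult_both: "x \<approx> y \<Longrightarrow> in_free u \<Longrightarrow> in_free v \<Longrightarrow> u * x * v \<approx> u * y * v"
  by (intro congr_mult_left congr_mult_right) simp_all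

lemma congr_scal: "x \<approx> y \<Longrightarrow> scal c * x \<approx> scal c * y"
  unfolding congr_def by (metis in_ideal_scal_mult right_diff_distrib)

lemma congr_sum: "(\<And>a. a \<in> A \<Longrightarrow> f a \<approx> h a) \<Longrightarrow> sum f A \<approx> sum h A"
  unfolding congr_def by (simp add: in_ideal_sum flip: sum_subtractf)

lemma congr_if: "(P \<Longrightarrow> x \<approx> y) \<Longrightarrow> (if P then x else 0) \<approx> (if P then y else 0)"
  by (cases P) simp_all

lemma ncoeff_g: "row i \<Longrightarrow> col j \<Longrightarrow> ncoeff (g i j) = G i j"
  by (simp add: g_def)

lemma triple_rel:
  assumes "row i" "row k" "row s" "col j" "col l" "col t"
  shows "g i j * g k l * g s t + g s t * g k l * g i j \<approx>
     (if j = l \<and> k = s then g i t else 0) + (if l = t \<and> k = i then g s j else (0::'a::field ncseries))"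
proof -
  have ncoeff_if: "ncoeff (if P then g a b else 0) = (if P then G a b else fzero)"
    if "row a" "col b" for P a b
    using that by (simp add: g_def ncoeff_zero)
  have "fsub (fadd (fmul (fmul (G i j) (G k l)) (G s t)) (fmul (fmul (G s t) (G k l)) (G i j)))
          (Phi p q (jtriple p q (matunit i j) (matunit k l) (matunit s t))) \<in> envrels p q"
    unfolding envrels_def using assms by blast
  moreover have "ncoeff (g i j * g k l * g s t + g s t * g k l * g i j -
     ((if j = l \<and> k = s then g i t else 0) + (if l = t \<and> k = i then g s j else (0::'a ncseries)))) =
     fsub (fadd (fmul (fmul (G i j) (G k l)) (G s t)) (fmul (fmul (G s t) (G k l)) (G i j)))
       (Phi p q (jtriple p q (matunit i j) (matunit k l) (matunit s t)))"
    using assms by (simp add: ncoeff_diff ncoeff_add ncoeff_mult ncoeff_g ncoeff_if Phi_jtriple_matunit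
        split del: if_split)
  ultimately show ?thesis
    unfolding congr_def in_ideal_def envideal_def by (metis ideal_gen.base)
qed

end

subsection \<open>Relations in the envelope\<close>

context rect_env
begin

lemma p_q_bounds [simp]:
  "1 \<le> p" "2 \<le> p" "Suc 0 \<le> p" "Suc (Suc 0) \<le> p" "0 < p"
  "1 \<le> q" "2 \<le> q" "Suc 0 \<le> q" "Suc (Suc 0) \<le> q" "0 < q"
  using p_gt_1 q_gt_1 by auto

definition other_col :: "nat \<Rightarrow> nat" where "other_col t = (if t = 1 then 2 else 1)"
definition other_row :: "nat \<Rightarrow> nat" where "other_row i = (if i = 1 then 2 else 1)"

lemma other_col_bounds [simp]: "1 \<le> other_col t" "Suc 0 \<le> other_col t" "other_col t \<le> q"
  by (auto simp: other_col_def)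

lemma other_row_bounds [simp]: "1 \<le> other_row i" "Suc 0 \<le> other_row i" "other_row i \<le> p"
  by (auto simp: other_row_def)

lemma other_col_neq [simp]: "other_col t \<noteq> t" "t \<noteq> other_col t"
  by (auto simp: other_col_def)

lemma other_row_neq [simp]: "other_row i \<noteq> i" "i \<noteq> other_row i"
  by (auto simp: other_row_def)

lemma other_col_1 [simp]: "other_col 1 = 2" "other_col (Suc 0) = 2"
  by (simp_all add: other_col_def)

text \<open>Under \<open>rep\<close>, \<open>sq i j\<close> acts as \<open>E(i, i) + E(p+j, p+j)\<close>, so \<open>upper i t\<close> and
  \<open>lower t i\<close> act as \<open>E(i, p+t)\<close> and \<open>E(p+t, i)\<close>.\<close>

definition sq :: "nat \<Rightarrow> nat \<Rightarrow> 'a::field_char_0 ncseries" where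
  "sq i j = g i j * g i j"

definition upper :: "nat \<Rightarrow> nat \<Rightarrow> 'a::field_char_0 ncseries" where
  "upper i t = sq i (other_col t) * g i t"

definition lower :: "nat \<Rightarrow> nat \<Rightarrow> 'a::field_char_0 ncseries" where
  "lower t i = g i t * sq i (other_col t)"

lemma in_free_sq [simp]: "in_free (sq i j)" by (simp add: sq_def)
lemma in_free_upper [simp]: "in_free (upper i j)" by (simp add: upper_def)
lemma in_free_lower [simp]: "in_free (lower i j)" by (simp add: lower_def)

lemma g_cube:
  assumes "row i" "col j"
  shows "g i j * g i j * g i j \<approx> (g i j :: 'a::field_char_0 ncseries)"
proof -
  have "g i j * g i j * g i j + g i j * g i j * g i j \<approx> g i j + (g i j ::'a ncseries)"
    using triple_rel[of i i i j j j] assms by simp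
  then have "in_ideal ((g i j * g i j * g i j - g i j) + (g i j * g i j * g i j - (g i j ::'a ncseries)))"
    unfolding congr_def by (simp add: algebra_simps)
  then show ?thesis unfolding congr_def by (rule in_ideal_half)
qed

lemma sq_idem:
  assumes "row i" "col j"
  shows "sq i j * sq i j \<approx> (sq i j :: 'a::field_char_0 ncseries)"
proof -
  have "sq i j * sq i j = (g i j * g i j * g i j) * (g i j ::'a ncseries)"
    by (simp add: sq_def mult.assoc)
  also have "\<dots> \<approx> g i j * g i j"
    by (rule congr_mult_right[OF g_cube]) (use assms in simp_all)
  also have "\<dots> = sq i j" by (simp add: sq_def)
  finally show ?thesis .
qed

lemma sq_anticommutator:
  assumes "row i" "col j" "row s" "col t"
  shows "sq i j * g s t + g s t * sq i j
      \<approx> (if i = s then g s t else 0)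
          + (if j = t then g s t else (0::'a::field_char_0 ncseries))"
proof -
  have "g i j * g i j * g s t + g s t * g i j * g i j
      \<approx> (if j = j \<and> i = s then g i t else 0)
          + (if j = t \<and> i = i then g s j else (0::'a ncseries))"
    using triple_rel[of i i s j j t] assms by simp
  then show ?thesis by (simp add: sq_def mult.assoc split: if_splits)
qed

lemma idempotent_anticommuting_annihilates:
  fixes e b :: "'a::field_char_0 ncseries"
  assumes "in_free e" "in_free b" "e * e \<approx> e" "e * b + b * e \<approx> 0"
  shows "e * b \<approx> 0" "b * e \<approx> 0"
proof -
  define r where "r = e * b + b * e"
  define d where "d = e * e - e"
  have r: "in_ideal r" and d: "in_ideal d"
    using assms(3,4) by (simp_all add: congr_def r_def d_def)
  have "in_ideal (e * r - r * e + r - d * b + b * d)"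
    using r d assms(1,2)
    by (intro in_ideal_add in_ideal_diff in_ideal_mult_left in_ideal_mult_right)
  moreover have "e * r - r * e + r - d * b + b * d = e * b + e * b"
    unfolding r_def d_def by (simp add: algebra_simps)
  ultimately have "in_ideal (e * b + e * b)" by simp
  then show "e * b \<approx> 0" unfolding congr_def diff_zero by (rule in_ideal_half)
  have "in_ideal (r * e - e * r + r + d * b - b * d)"
    using r d assms(1,2)
    by (intro in_ideal_add in_ideal_diff in_ideal_mult_left in_ideal_mult_right)
  moreover have "r * e - e * r + r + d * b - b * d = b * e + b * e"
    unfolding r_def d_def by (simp add: algebra_simps)
  ultimately have "in_ideal (b * e + b * e)" by simp
  then show "b * e \<approx> 0" unfolding congr_def diff_zero by (rule in_ideal_half)
qed

lemma sq_g_disjoint: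
  assumes "row i" "col j" "row s" "col t" "i \<noteq> s" "j \<noteq> t"
  shows "sq i j * g s t \<approx> (0::'a::field_char_0 ncseries)"
    and "g s t * sq i j \<approx> (0::'a ncseries)"
proof -
  have "sq i j * sq i j \<approx> (sq i j :: 'a ncseries)"
    and "sq i j * g s t + g s t * sq i j \<approx> (0 :: 'a ncseries)"
    using sq_idem[of i j] sq_anticommutator[of i j s t] assms by simp_all
  then show "sq i j * g s t \<approx> (0::'a ncseries)" "g s t * sq i j \<approx> (0::'a ncseries)"
    using idempotent_anticommuting_annihilates[of "sq i j" "g s t"] by simp_all
qed

lemma g_g_disjoint:
  assumes "row i" "col j" "row k" "col l" "i \<noteq> k" "j \<noteq> l"
  shows "g i j * g k l \<approx> (0::'a::field_char_0 ncseries)"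
proof -
  have "g i j * g k l \<approx> (g i j * g i j * g i j) * (g k l ::'a ncseries)"
    by (rule congr_sym, rule congr_mult_right[OF g_cube]) (use assms in simp_all)
  also have "\<dots> = g i j * (sq i j * g k l)" by (simp add: sq_def mult.assoc)
  also have "\<dots> \<approx> g i j * 0"
    by (rule congr_mult_left[OF sq_g_disjoint(1)]) (use assms in simp_all)
  finally show ?thesis by simp
qed

lemma sq_sq_disjoint:
  assumes "row i" "col j" "row k" "col l" "i \<noteq> k" "j \<noteq> l"
  shows "sq i j * sq k l \<approx> (0::'a::field_char_0 ncseries)"
proof -
  have "sq i j * sq k l = g i j * (g i j * g k l) * (g k l ::'a ncseries)"
    by (simp add: sq_def mult.assoc)
  also have "\<dots> \<approx> g i j * 0 * g k l"
    by (rule congr_mult_both[OF g_g_disjoint]) (use assms in simp_all)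
  finally show ?thesis by simp
qed

lemma sq_anticommutator_adjacent:
  assumes "row i" "col j" "row s" "col t" "(i = s) \<noteq> (j = t)"
  shows "sq i j * g s t + g s t * sq i j \<approx> (g s t::'a::field_char_0 ncseries)"
  using sq_anticommutator[of i j s t] assms by (auto split: if_splits)

lemma g_eq_upper_plus_lower:
  assumes "row i" "col t"
  shows "g i t \<approx> upper i t + (lower t i :: 'a::field_char_0 ncseries)"
  unfolding upper_def lower_def
  by (rule congr_sym, rule sq_anticommutator_adjacent) (use assms in simp_all)

lemma sq_g_row_path:
  assumes "row i" "row k" "col j" "col t" "col c" "k \<noteq> i" "j \<noteq> t" "c \<noteq> t"
  shows "sq i c * g i t \<approx> g i j * g k j * (g k t :: 'a::field_char_0 ncseries)"
proof -
  have rel: "g i j * g k j * g k t + g k t * g k j * g i j \<approx> (g i t ::'a ncseries)"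
    using triple_rel[of i k k j j t] assms by simp
  have A: "sq i c * (g i j * g k j * g k t) \<approx> g i j * g k j * (g k t ::'a ncseries)"
  proof (cases "c = j")
    case True
    have "sq i c * (g i j * g k j * g k t)
        = (g i j * g i j * g i j) * (g k j * (g k t ::'a ncseries))"
      using True by (simp add: sq_def mult.assoc)
    also have "\<dots> \<approx> g i j * (g k j * g k t)"
      by (rule congr_mult_right[OF g_cube]) (use assms in simp_all)
    finally show ?thesis by (simp add: mult.assoc)
  next
    case False
    have p1: "sq i c * g i j + g i j * sq i c \<approx> (g i j ::'a ncseries)"
      by (rule sq_anticommutator_adjacent) (use assms False in auto)
    have "sq i c * (g i j * g k j * g k t)
        = (sq i c * g i j + g i j * sq i c) * (g k j * g k t) - g i j * (sq i c * g k j) * (g k t ::'a ncseries)"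
      by (simp add: algebra_simps)
    also have "\<dots> \<approx> g i j * (g k j * g k t) - g i j * 0 * g k t"
      by (intro congr_diff congr_mult_right[OF p1] congr_mult_both[OF sq_g_disjoint(1)])
         (use assms False in simp_all)
    finally show ?thesis by (simp add: mult.assoc)
  qed
  have B: "sq i c * (g k t * g k j * g i j) \<approx> (0 ::'a ncseries)"
  proof -
    have "sq i c * (g k t * g k j * g i j) = (sq i c * g k t) * (g k j * (g i j ::'a ncseries))"
      by (simp add: mult.assoc)
    also have "\<dots> \<approx> 0 * (g k j * g i j)"
      by (rule congr_mult_right[OF sq_g_disjoint(1)]) (use assms in simp_all)
    finally show ?thesis by simp
  qed
  have "sq i c * g i t
      \<approx> sq i c * (g i j * g k j * g k t + g k t * g k j * (g i j ::'a ncseries))"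
    by (rule congr_sym, rule congr_mult_left[OF rel]) simp
  also have "\<dots> = sq i c * (g i j * g k j * g k t) + sq i c * (g k t * g k j * g i j)"
    by (simp add: distrib_left)
  also have "\<dots> \<approx> g i j * g k j * g k t + 0" by (rule congr_add[OF A B])
  finally show ?thesis by simp
qed

lemma g_sq_col_path:
  assumes "row i" "row k" "col j" "col t" "k \<noteq> i" "j \<noteq> t"
  shows "g i t * sq k t \<approx> g i j * g k j * (g k t :: 'a::field_char_0 ncseries)"
proof -
  have rel: "g i j * g k j * g k t + g k t * g k j * g i j \<approx> (g i t ::'a ncseries)"
    using triple_rel[of i k k j j t] assms by simp
  have A: "(g i j * g k j * g k t) * sq k t \<approx> g i j * g k j * (g k t ::'a ncseries)"
  proof -
    have "(g i j * g k j * g k t) * sq k t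
        = (g i j * g k j) * (g k t * g k t * (g k t ::'a ncseries))"
      by (simp add: sq_def mult.assoc)
    also have "\<dots> \<approx> (g i j * g k j) * g k t"
      by (rule congr_mult_left[OF g_cube]) (use assms in simp_all)
    finally show ?thesis .
  qed
  have B: "(g k t * g k j * g i j) * sq k t \<approx> (0 ::'a ncseries)"
  proof -
    have "(g k t * g k j * g i j) * sq k t = (g k t * g k j) * (g i j * (sq k t ::'a ncseries))"
      by (simp add: mult.assoc)
    also have "\<dots> \<approx> (g k t * g k j) * 0"
      by (rule congr_mult_left[OF sq_g_disjoint(2)]) (use assms in simp_all)
    finally show ?thesis by simp
  qed
  have "g i t * sq k t
      \<approx> (g i j * g k j * g k t + g k t * g k j * g i j) * (sq k t ::'a ncseries)"
    by (rule congr_sym, rule congr_mult_right[OF rel]) simp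
  also have "\<dots> = (g i j * g k j * g k t) * sq k t + (g k t * g k j * g i j) * sq k t"
    by (simp add: distrib_right)
  also have "\<dots> \<approx> g i j * g k j * g k t + 0" by (rule congr_add[OF A B])
  finally show ?thesis by simp
qed

lemma sq_g_row_eq_upper:
  assumes "row i" "col t" "col c" "c \<noteq> t"
  shows "sq i c * g i t \<approx> (upper i t :: 'a::field_char_0 ncseries)"
proof -
  have "sq i c * g i t
      \<approx> g i (other_col t) * g (other_row i) (other_col t) * (g (other_row i) t ::'a ncseries)"
    by (rule sq_g_row_path) (use assms in auto)
  also have "\<dots> \<approx> sq i (other_col t) * g i t"
    by (rule congr_sym, rule sq_g_row_path) (use assms in auto)
  finally show ?thesis by (simp add: upper_def)
qed

lemma g_sq_col_eq_upper:
  assumes "row i" "row k" "col t" "k \<noteq> i"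
  shows "g i t * sq k t \<approx> (upper i t :: 'a::field_char_0 ncseries)"
proof -
  have "g i t * sq k t \<approx> g i (other_col t) * g k (other_col t) * (g k t ::'a ncseries)"
    by (rule g_sq_col_path) (use assms in auto)
  also have "\<dots> \<approx> sq i (other_col t) * g i t"
    by (rule congr_sym, rule sq_g_row_path) (use assms in auto)
  finally show ?thesis by (simp add: upper_def)
qed

lemma g_sq_row_path:
  assumes "row i" "row k" "col j" "col t" "col c" "k \<noteq> i" "j \<noteq> t" "c \<noteq> t"
  shows "g i t * sq i c \<approx> g k t * g k j * (g i j :: 'a::field_char_0 ncseries)"
proof -
  have rel: "g k t * g k j * g i j + g i j * g k j * g k t \<approx> (g i t ::'a ncseries)"
    using triple_rel[of k k i t j j] assms by simp
  have A: "(g k t * g k j * g i j) * sq i c \<approx> g k t * g k j * (g i j ::'a ncseries)"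
  proof (cases "c = j")
    case True
    have "(g k t * g k j * g i j) * sq i c
        = (g k t * g k j) * (g i j * g i j * (g i j ::'a ncseries))"
      using True by (simp add: sq_def mult.assoc)
    also have "\<dots> \<approx> (g k t * g k j) * g i j"
      by (rule congr_mult_left[OF g_cube]) (use assms in simp_all)
    finally show ?thesis .
  next
    case False
    have p1: "sq i c * g i j + g i j * sq i c \<approx> (g i j ::'a ncseries)"
      by (rule sq_anticommutator_adjacent) (use assms False in auto)
    have "(g k t * g k j * g i j) * sq i c
        = (g k t * g k j) * (sq i c * g i j + g i j * sq i c) - g k t * (g k j * sq i c) * (g i j ::'a ncseries)"
      by (simp add: algebra_simps)
    also have "\<dots> \<approx> (g k t * g k j) * g i j - g k t * 0 * g i j"
      by (intro congr_diff congr_mult_left[OF p1] congr_mult_both[OF sq_g_disjoint(2)])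
         (use assms False in simp_all)
    finally show ?thesis by simp
  qed
  have B: "(g i j * g k j * g k t) * sq i c \<approx> (0 ::'a ncseries)"
  proof -
    have "(g i j * g k j * g k t) * sq i c = (g i j * g k j) * (g k t * (sq i c ::'a ncseries))"
      by (simp add: mult.assoc)
    also have "\<dots> \<approx> (g i j * g k j) * 0"
      by (rule congr_mult_left[OF sq_g_disjoint(2)]) (use assms in simp_all)
    finally show ?thesis by simp
  qed
  have "g i t * sq i c
      \<approx> (g k t * g k j * g i j + g i j * g k j * g k t) * (sq i c ::'a ncseries)"
    by (rule congr_sym, rule congr_mult_right[OF rel]) simp
  also have "\<dots> = (g k t * g k j * g i j) * sq i c + (g i j * g k j * g k t) * sq i c"
    by (simp add: distrib_right)
  also have "\<dots> \<approx> g k t * g k j * g i j + 0" by (rule congr_add[OF A B])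
  finally show ?thesis by simp
qed

lemma sq_g_col_path:
  assumes "row i" "row k" "col j" "col t" "k \<noteq> i" "j \<noteq> t"
  shows "sq k t * g i t \<approx> g k t * g k j * (g i j :: 'a::field_char_0 ncseries)"
proof -
  have rel: "g k t * g k j * g i j + g i j * g k j * g k t \<approx> (g i t ::'a ncseries)"
    using triple_rel[of k k i t j j] assms by simp
  have A: "sq k t * (g k t * g k j * g i j) \<approx> g k t * g k j * (g i j ::'a ncseries)"
  proof -
    have "sq k t * (g k t * g k j * g i j)
        = (g k t * g k t * g k t) * (g k j * (g i j ::'a ncseries))"
      by (simp add: sq_def mult.assoc)
    also have "\<dots> \<approx> g k t * (g k j * g i j)"
      by (rule congr_mult_right[OF g_cube]) (use assms in simp_all)
    finally show ?thesis by (simp add: mult.assoc)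
  qed
  have B: "sq k t * (g i j * g k j * g k t) \<approx> (0 ::'a ncseries)"
  proof -
    have "sq k t * (g i j * g k j * g k t) = (sq k t * g i j) * (g k j * (g k t ::'a ncseries))"
      by (simp add: mult.assoc)
    also have "\<dots> \<approx> 0 * (g k j * g k t)"
      by (rule congr_mult_right[OF sq_g_disjoint(1)]) (use assms in simp_all)
    finally show ?thesis by simp
  qed
  have "sq k t * g i t
      \<approx> sq k t * (g k t * g k j * g i j + g i j * g k j * (g k t ::'a ncseries))"
    by (rule congr_sym, rule congr_mult_left[OF rel]) simp
  also have "\<dots> = sq k t * (g k t * g k j * g i j) + sq k t * (g i j * g k j * g k t)"
    by (simp add: distrib_left)
  also have "\<dots> \<approx> g k t * g k j * g i j + 0" by (rule congr_add[OF A B])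
  finally show ?thesis by simp
qed

lemma g_sq_row_eq_lower:
  assumes "row i" "col t" "col c" "c \<noteq> t"
  shows "g i t * sq i c \<approx> (lower t i :: 'a::field_char_0 ncseries)"
proof -
  have "g i t * sq i c
      \<approx> g (other_row i) t * g (other_row i) (other_col t) * (g i (other_col t) ::'a ncseries)"
    by (rule g_sq_row_path) (use assms in auto)
  also have "\<dots> \<approx> g i t * sq i (other_col t)"
    by (rule congr_sym, rule g_sq_row_path) (use assms in auto)
  finally show ?thesis by (simp add: lower_def)
qed

lemma sq_g_col_eq_lower:
  assumes "row i" "row k" "col t" "k \<noteq> i"
  shows "sq k t * g i t \<approx> (lower t i :: 'a::field_char_0 ncseries)"
proof -
  have "sq k t * g i t \<approx> g k t * g k (other_col t) * (g i (other_col t) ::'a ncseries)"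
    by (rule sq_g_col_path) (use assms in auto)
  also have "\<dots> \<approx> g i t * sq i (other_col t)"
    by (rule congr_sym, rule g_sq_row_path) (use assms in auto)
  finally show ?thesis by (simp add: lower_def)
qed

lemma g_col_triple_zero:
  assumes "row i" "row k" "row s" "col t" "i \<noteq> k" "k \<noteq> s"
  shows "g i t * g k t * g s t \<approx> (0::'a::field_char_0 ncseries)"
proof -
  have "g i t * g k t * g s t \<approx> g i t * (upper k t + lower t k) * (g s t ::'a ncseries)"
    by (rule congr_mult_both[OF g_eq_upper_plus_lower]) (use assms in simp_all)
  also have "\<dots> = (g i t * sq k (other_col t)) * g k t * g s t + g i t * g k t * (sq k (other_col t) * g s t)"
    by (simp add: upper_def lower_def algebra_simps)
  also have "\<dots> \<approx> 0 * g k t * g s t + g i t * g k t * 0"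
    by (intro congr_add congr_mult_right congr_mult_left sq_g_disjoint) (use assms in simp_all)
  finally show ?thesis by simp
qed

lemma g_row_triple_zero:
  assumes "row i" "col j" "col l" "col t" "j \<noteq> l" "l \<noteq> t"
  shows "g i j * g i l * g i t \<approx> (0::'a::field_char_0 ncseries)"
proof -
  have "g i j * g i l * g i t \<approx> g i j * (upper i l + lower l i) * (g i t ::'a ncseries)"
    by (rule congr_mult_both[OF g_eq_upper_plus_lower]) (use assms in simp_all)
  also have "\<dots> \<approx> g i j * (g i l * sq (other_row i) l + sq (other_row i) l * g i l) * (g i t ::'a ncseries)"
    by (intro congr_mult_both congr_add congr_sym[OF g_sq_col_eq_upper] congr_sym[OF sq_g_col_eq_lower])
       (use assms in simp_all)
  also have "\<dots> = g i j * g i l * (sq (other_row i) l * g i t) + (g i j * sq (other_row i) l) * g i l * g i t"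
    by (simp add: algebra_simps)
  also have "\<dots> \<approx> g i j * g i l * 0 + 0 * g i l * g i t"
    by (intro congr_add congr_mult_right congr_mult_left sq_g_disjoint) (use assms in simp_all)
  finally show ?thesis by simp
qed

lemma g_path_eq_upper:
  assumes "row i" "row k" "col j" "col t" "i \<noteq> k \<or> j \<noteq> t"
  shows "g i j * g k j * g k t \<approx> (upper i t :: 'a::field_char_0 ncseries)"
proof (cases "i = k")
  case True
  then have "j \<noteq> t" using assms by simp
  have "g i j * g k j * g k t = sq i j * (g i t :: 'a ncseries)" using True by (simp add: sq_def)
  also have "\<dots> \<approx> upper i t"
    by (rule sq_g_row_eq_upper) (use assms \<open>j \<noteq> t\<close> in simp_all)
  finally show ?thesis .
next
  case False
  show ?thesis
  proof (cases "j = t")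
    case True
    have "g i j * g k j * g k t = g i t * (sq k t :: 'a ncseries)"
      using True by (simp add: sq_def mult.assoc)
    also have "\<dots> \<approx> upper i t"
      by (rule g_sq_col_eq_upper) (use assms False in simp_all)
    finally show ?thesis .
  next
    case jt: False
    have "g i j * g k j * g k t \<approx> sq i (other_col t) * (g i t :: 'a ncseries)"
      by (intro congr_sym[OF sq_g_row_path]) (use assms False jt in simp_all)
    then show ?thesis by (simp add: upper_def)
  qed
qed

lemma g_path_eq_lower:
  assumes "row i" "row s" "col j" "col t" "i \<noteq> s \<or> j \<noteq> t"
  shows "g i j * g i t * g s t \<approx> (lower j s :: 'a::field_char_0 ncseries)"
proof (cases "j = t")
  case True
  then have "i \<noteq> s" using assms by simp
  have "g i j * g i t * g s t = sq i t * (g s t :: 'a ncseries)" using True by (simp add: sq_def)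
  also have "\<dots> \<approx> lower t s"
    by (rule sq_g_col_eq_lower) (use assms \<open>i \<noteq> s\<close> in simp_all)
  finally show ?thesis using True by simp
next
  case False
  show ?thesis
  proof (cases "s = i")
    case True
    have "g i j * g i t * g s t = g i j * (sq i t :: 'a ncseries)"
      using True by (simp add: sq_def mult.assoc)
    also have "\<dots> \<approx> lower j i"
      by (rule g_sq_row_eq_lower) (use assms False in simp_all)
    finally show ?thesis using True by simp
  next
    case si: False
    have "g i j * g i t * g s t \<approx> g s j * (sq s (other_col j) :: 'a ncseries)"
      by (intro congr_sym[OF g_sq_row_path]) (use assms False si in simp_all)
    then show ?thesis by (simp add: lower_def)
  qed
qed

lemma g_triple_zero:
  assumes "row i" "row k" "row s" "col j" "col l" "col t"
    and "\<not> (j = l \<and> k = s)" "\<not> (i = k \<and> l = t)"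
  shows "g i j * g k l * g s t \<approx> (0::'a::field_char_0 ncseries)"
proof -
  consider "i \<noteq> k" "j \<noteq> l" | "k \<noteq> s" "l \<noteq> t" | "i = k" "k = s" "j \<noteq> l" "l \<noteq> t"
    | "j = l" "l = t" "i \<noteq> k" "k \<noteq> s"
    using assms(7,8) by blast
  then show ?thesis
  proof cases
    case 1
    have "g i j * g k l * g s t \<approx> 0 * (g s t :: 'a ncseries)"
      by (rule congr_mult_right[OF g_g_disjoint]) (use assms 1 in simp_all)
    then show ?thesis by simp
  next
    case 2
    have "g i j * g k l * g s t = g i j * (g k l * (g s t :: 'a ncseries))"
      by (simp add: mult.assoc)
    also have "\<dots> \<approx> g i j * 0"
      by (rule congr_mult_left[OF g_g_disjoint]) (use assms 2 in simp_all)
    finally show ?thesis by simp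
  next
    case 3
    then show ?thesis using g_row_triple_zero[of i j l t] assms by simp
  next
    case 4
    then show ?thesis using g_col_triple_zero[of i k s t] assms by simp
  qed
qed

lemma g_triple_product:
  assumes "row i" "row k" "row s" "col j" "col l" "col t"
  shows "g i j * g k l * g s t \<approx>
    (if j = l \<and> k = s then upper i t else 0)
        + (if i = k \<and> l = t then lower j s else (0::'a::field_char_0 ncseries))"
proof -
  consider "j = l" "k = s" "i = k" "l = t" | "j = l" "k = s" "i \<noteq> k \<or> l \<noteq> t"
    | "i = k" "l = t" "j \<noteq> l \<or> k \<noteq> s" | "\<not> (j = l \<and> k = s)" "\<not> (i = k \<and> l = t)"
    by blast
  then show ?thesis
  proof cases
    case 1
    have "g i t * g i t * g i t \<approx> (g i t :: 'a ncseries)"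
      by (rule g_cube) (use assms in simp_all)
    also have "\<dots> \<approx> upper i t + lower t i"
      by (rule g_eq_upper_plus_lower) (use assms in simp_all)
    finally show ?thesis using 1 by simp
  next
    case 2
    then show ?thesis using g_path_eq_upper[of i k j t] assms by auto
  next
    case 3
    then show ?thesis using g_path_eq_lower[of i s j t] assms by auto
  next
    case 4
    then show ?thesis
      using g_triple_zero[OF assms 4]
      by (simp only: if_not_P[OF 4(1)] if_not_P[OF 4(2)] if_False add_0)
  qed
qed

lemma g_upper_eq_lower_g:
  assumes "row m" "col v" "col t"
  shows "g m v * upper m t \<approx> lower v m * (g m t :: 'a::field_char_0 ncseries)"
proof -
  have "g m v * upper m t = (g m v * g m (other_col t) * g m (other_col t)) * (g m t ::'a ncseries)"
    by (simp add: upper_def sq_def mult.assoc)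
  also have "\<dots> \<approx> ((if v = other_col t \<and> m = m then upper m (other_col t) else 0)
      + (if m = m \<and> other_col t = other_col t then lower v m else 0)) * g m t"
    by (rule congr_mult_right[OF g_triple_product]) (use assms in simp_all)
  also have "\<dots> = (if v = other_col t then upper m (other_col t) * g m t else 0) + lower v m * g m t"
    by (simp add: distrib_right)
  also have "\<dots> \<approx> 0 + lower v m * g m t"
  proof (rule congr_add)
    show "(if v = other_col t then upper m (other_col t) * g m t else 0)
        \<approx> (0 ::'a ncseries)"
    proof (cases "v = other_col t")
      case True
      have "upper m (other_col t) * g m t
          \<approx> g m (other_col t) * sq (other_row m) (other_col t) * (g m t ::'a ncseries)"
        by (rule congr_mult_right[OF congr_sym[OF g_sq_col_eq_upper]]) (use assms in simp_all)
      also have "\<dots> = g m (other_col t) * (sq (other_row m) (other_col t) * g m t)"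
        by (simp add: mult.assoc)
      also have "\<dots> \<approx> g m (other_col t) * 0"
        by (rule congr_mult_left[OF sq_g_disjoint(1)]) (use assms in simp_all)
      finally show ?thesis using True by simp
    qed simp
  qed simp
  finally show ?thesis by simp
qed

lemma lower_g_eq_g_upper:
  assumes "row k" "row m" "col v" "col t" "k \<noteq> m"
  shows "lower v k * g k t \<approx> g m v * (upper m t :: 'a::field_char_0 ncseries)"
proof -
  have "lower v k * g k t \<approx> sq m v * g k v * (g k t ::'a ncseries)"
    by (rule congr_mult_right[OF congr_sym[OF sq_g_col_eq_lower]]) (use assms in simp_all)
  also have "\<dots> = g m v * (g m v * g k v * g k t)" by (simp add: sq_def mult.assoc)
  also have "\<dots> \<approx> g m v * ((if v = v \<and> k = k then upper m t else 0)
      + (if m = k \<and> v = t then lower v k else 0))"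
    by (rule congr_mult_left[OF g_triple_product]) (use assms in simp_all)
  also have "\<dots> = g m v * upper m t" using assms by simp
  finally show ?thesis .
qed

lemma lower_g_base:
  assumes "row k" "col v" "col t"
  shows "lower v k * g k t \<approx> lower v 1 * (g 1 t :: 'a::field_char_0 ncseries)"
proof (cases "k = 1")
  case False
  have "lower v k * g k t \<approx> g 1 v * (upper 1 t ::'a ncseries)"
    by (rule lower_g_eq_g_upper) (use assms False in simp_all)
  also have "\<dots> \<approx> lower v 1 * g 1 t"
    by (rule g_upper_eq_lower_g) (use assms in simp_all)
  finally show ?thesis .
qed simp

lemma upper_g_eq_g_lower:
  assumes "row i" "row k" "col t" "col w" "w \<noteq> t"
  shows "upper i t * g k t \<approx> g i w * (lower w k :: 'a::field_char_0 ncseries)"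
proof -
  have "upper i t * g k t \<approx> sq i w * g i t * (g k t ::'a ncseries)"
    by (rule congr_mult_right[OF congr_sym[OF sq_g_row_eq_upper]]) (use assms in simp_all)
  also have "\<dots> = g i w * (g i w * g i t * g k t)" by (simp add: sq_def mult.assoc)
  also have "\<dots> \<approx> g i w * ((if w = t \<and> i = k then upper i t else 0)
      + (if i = i \<and> t = t then lower w k else 0))"
    by (rule congr_mult_left[OF g_triple_product]) (use assms in simp_all)
  also have "\<dots> = g i w * lower w k" using assms by simp
  finally show ?thesis .
qed

lemma g_lower_eq_upper_g:
  assumes "row i" "row k" "col w"
  shows "g i w * lower w k \<approx> upper i w * (g k w :: 'a::field_char_0 ncseries)"
proof -
  have "g i w * lower w k \<approx> g i w * (sq (other_row k) w * (g k w ::'a ncseries))"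
    by (rule congr_mult_left[OF congr_sym[OF sq_g_col_eq_lower]]) (use assms in simp_all)
  also have "\<dots> = (g i w * g (other_row k) w * g (other_row k) w) * g k w"
    by (simp add: sq_def mult.assoc)
  also have "\<dots> \<approx> ((if w = w \<and> other_row k = other_row k then upper i w else 0)
      + (if i = other_row k \<and> w = w then lower w (other_row k) else 0)) * g k w"
    by (rule congr_mult_right[OF g_triple_product]) (use assms in simp_all)
  also have "\<dots> = upper i w * g k w + (if i = other_row k then lower w i * g k w else 0)"
    by (simp add: distrib_right)
  also have "\<dots> \<approx> upper i w * g k w + 0"
  proof (rule congr_add)
    show "(if i = other_row k then lower w i * g k w else 0) \<approx> (0 ::'a ncseries)"
    proof (cases "i = other_row k")
      case True
      have "lower w i * g k w = g i w * (sq i (other_col w) * (g k w ::'a ncseries))"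
        by (simp add: lower_def mult.assoc)
      also have "\<dots> \<approx> g i w * 0"
        by (rule congr_mult_left[OF sq_g_disjoint(1)]) (use assms True in simp_all)
      finally show ?thesis using True by simp
    qed simp
  qed simp
  finally show ?thesis by simp
qed

lemma upper_g_base:
  assumes "row i" "row k" "col t"
  shows "upper i t * g k t \<approx> upper i 1 * (g k 1 :: 'a::field_char_0 ncseries)"
proof (cases "t = 1")
  case False
  have "upper i t * g k t \<approx> g i 1 * (lower 1 k ::'a ncseries)"
    by (rule upper_g_eq_g_lower) (use assms False in simp_all)
  also have "\<dots> \<approx> upper i 1 * g k 1"
    by (rule g_lower_eq_upper_g) (use assms in simp_all)
  finally show ?thesis .
qed simp

lemma sq_upper:
  assumes "row u" "col t" "col c"
  shows "sq u c * upper u t \<approx> (upper u t :: 'a::field_char_0 ncseries)"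
proof (cases "c = t")
  case True
  have "sq u c * upper u t \<approx> sq u c * (g u t * (sq (other_row u) t ::'a ncseries))"
    by (intro congr_mult_left[OF congr_sym[OF g_sq_col_eq_upper]]) (use assms in simp_all)
  also have "\<dots> = (g u t * g u t * g u t) * sq (other_row u) t"
    using True by (simp add: sq_def mult.assoc)
  also have "\<dots> \<approx> g u t * sq (other_row u) t"
    by (rule congr_mult_right[OF g_cube]) (use assms in simp_all)
  also have "\<dots> \<approx> upper u t" by (rule g_sq_col_eq_upper) (use assms in simp_all)
  finally show ?thesis .
next
  case False
  have "sq u c * upper u t \<approx> sq u c * (sq u c * (g u t ::'a ncseries))"
    by (intro congr_mult_left[OF congr_sym[OF sq_g_row_eq_upper]]) (use assms False in simp_all)
  also have "\<dots> = (sq u c * sq u c) * g u t" by (simp add: mult.assoc)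
  also have "\<dots> \<approx> sq u c * g u t"
    by (rule congr_mult_right[OF sq_idem]) (use assms in simp_all)
  also have "\<dots> \<approx> upper u t" by (rule sq_g_row_eq_upper) (use assms False in simp_all)
  finally show ?thesis .
qed

lemma sq_lower:
  assumes "row m" "row k" "col v"
  shows "sq m v * lower v k \<approx> (lower v k :: 'a::field_char_0 ncseries)"
proof (cases "m = k")
  case True
  have "sq m v * lower v k = (g k v * g k v * g k v) * (sq k (other_col v) ::'a ncseries)"
    using True by (simp add: sq_def lower_def mult.assoc)
  also have "\<dots> \<approx> g k v * sq k (other_col v)"
    by (rule congr_mult_right[OF g_cube]) (use assms in simp_all)
  finally show ?thesis by (simp add: lower_def)
next
  case False
  have "sq m v * lower v k \<approx> sq m v * (sq m v * (g k v ::'a ncseries))"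
    by (intro congr_mult_left[OF congr_sym[OF sq_g_col_eq_lower]]) (use assms False in simp_all)
  also have "\<dots> = (sq m v * sq m v) * g k v" by (simp add: mult.assoc)
  also have "\<dots> \<approx> sq m v * g k v"
    by (rule congr_mult_right[OF sq_idem]) (use assms in simp_all)
  also have "\<dots> \<approx> lower v k" by (rule sq_g_col_eq_lower) (use assms False in simp_all)
  finally show ?thesis .
qed

lemma g_upper:
  assumes "row u" "col v" "row i" "col t"
  shows "g u v * upper i t
      \<approx> (if u = i then lower v 1 * g 1 t else (0::'a::field_char_0 ncseries))"
proof -
  have "g u v * upper i t \<approx> g u v * (g i t * (sq (other_row i) t ::'a ncseries))"
    by (rule congr_mult_left[OF congr_sym[OF g_sq_col_eq_upper]]) (use assms in simp_all)
  also have "\<dots> = (g u v * g i t * g (other_row i) t) * g (other_row i) t"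
    by (simp add: sq_def mult.assoc)
  also have "\<dots> \<approx> ((if v = t \<and> i = other_row i then upper u t else 0)
      + (if u = i \<and> t = t then lower v (other_row i) else 0)) * g (other_row i) t"
    by (rule congr_mult_right[OF g_triple_product]) (use assms in simp_all)
  also have "\<dots> = (if u = i then lower v (other_row i) * g (other_row i) t else 0)" by simp
  also have "\<dots> \<approx> (if u = i then lower v 1 * g 1 t else 0)"
    by (rule congr_if, rule lower_g_base) (use assms in simp_all)
  finally show ?thesis .
qed

lemma g_lower:
  assumes "row u" "col v" "row i" "col t"
  shows "g u v * lower t i
      \<approx> (if v = t then upper u 1 * g i 1 else (0::'a::field_char_0 ncseries))"
proof -
  have "g u v * lower t i = (g u v * g i t * g i (other_col t)) * (g i (other_col t) ::'a ncseries)"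
    by (simp add: lower_def sq_def mult.assoc)
  also have "\<dots> \<approx> ((if v = t \<and> i = i then upper u (other_col t) else 0)
      + (if u = i \<and> t = other_col t then lower v i else 0)) * g i (other_col t)"
    by (rule congr_mult_right[OF g_triple_product]) (use assms in simp_all)
  also have "\<dots> = (if v = t then upper u (other_col t) * g i (other_col t) else 0)" by simp
  also have "\<dots> \<approx> (if v = t then upper u 1 * g i 1 else 0)"
    by (rule congr_if, rule upper_g_base) (use assms in simp_all)
  finally show ?thesis .
qed

lemma lower_g_g:
  assumes "row k" "col v"
  shows "lower v 1 * g 1 1 * g k 1 \<approx> (lower v k :: 'a::field_char_0 ncseries)"
proof -
  have "lower v 1 * g 1 1 * g k 1 \<approx> sq 2 v * g 1 v * g 1 1 * (g k 1 ::'a ncseries)"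
    by (intro congr_mult_right congr_sym[OF sq_g_col_eq_lower]) (use assms in simp_all)
  also have "\<dots> = sq 2 v * (g 1 v * g 1 1 * g k 1)" by (simp add: mult.assoc)
  also have "\<dots> \<approx> sq 2 v * ((if v = 1 \<and> 1 = k then upper 1 1 else 0)
      + (if (1::nat) = 1 \<and> (1::nat) = 1 then lower v k else 0))"
    by (rule congr_mult_left[OF g_triple_product]) (use assms in simp_all)
  also have "\<dots> = (if v = 1 \<and> k = 1 then sq 2 1 * upper 1 1 else 0) + sq 2 v * lower v k"
    by (auto simp: distrib_left)
  also have "\<dots> \<approx> 0 + lower v k"
  proof (rule congr_add)
    show "(if v = 1 \<and> k = 1 then sq 2 1 * upper 1 1 else 0) \<approx> (0 ::'a ncseries)"
    proof -
      have "sq 2 1 * upper 1 1 = sq 2 1 * sq 1 2 * (g 1 1 ::'a ncseries)"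
        by (simp add: upper_def mult.assoc)
      also have "\<dots> \<approx> 0 * g 1 1" by (rule congr_mult_right[OF sq_sq_disjoint]) simp_all
      finally show ?thesis by simp
    qed
    show "sq 2 v * lower v k \<approx> lower v k" by (rule sq_lower) (use assms in simp_all)
  qed
  finally show ?thesis by simp
qed

lemma upper_g_g:
  assumes "row u" "col t"
  shows "upper u 1 * g 1 1 * g 1 t \<approx> (upper u t :: 'a::field_char_0 ncseries)"
proof -
  have "upper u 1 * g 1 1 * g 1 t = sq u (other_col 1) * (g u 1 * g 1 1 * (g 1 t ::'a ncseries))"
    by (simp only: upper_def mult.assoc)
  also have "\<dots> = sq u 2 * (g u 1 * g 1 1 * (g 1 t ::'a ncseries))" by (simp only: other_col_1)
  also have "\<dots> \<approx> sq u 2 * ((if (1::nat) = 1 \<and> (1::nat) = 1 then upper u t else 0)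
      + (if u = 1 \<and> 1 = t then lower 1 1 else 0))"
    by (rule congr_mult_left[OF g_triple_product]) (use assms in simp_all)
  also have "\<dots> = sq u 2 * upper u t + (if u = 1 \<and> t = 1 then sq 1 2 * lower 1 1 else 0)"
    by (auto simp: distrib_left)
  also have "\<dots> \<approx> upper u t + 0"
  proof (rule congr_add)
    show "sq u 2 * upper u t \<approx> upper u t" by (rule sq_upper) (use assms in simp_all)
    show "(if u = 1 \<and> t = 1 then sq 1 2 * lower 1 1 else 0) \<approx> (0 ::'a ncseries)"
    proof -
      have "sq 1 2 * lower 1 1 \<approx> sq 1 2 * (sq 2 1 * (g 1 1 ::'a ncseries))"
        by (rule congr_mult_left[OF congr_sym[OF sq_g_col_eq_lower]]) simp_all
      also have "\<dots> = (sq 1 2 * sq 2 1) * g 1 1" by (simp add: mult.assoc)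
      also have "\<dots> \<approx> 0 * g 1 1" by (rule congr_mult_right[OF sq_sq_disjoint]) simp_all
      finally show ?thesis by simp
    qed
  qed
  finally show ?thesis by simp
qed

lemma g_upper_g:
  assumes "row u" "col v" "row i" "row k"
  shows "g u v * (upper i 1 * g k 1)
      \<approx> (if u = i then lower v k else (0::'a::field_char_0 ncseries))"
proof -
  have "g u v * (upper i 1 * g k 1) = (g u v * upper i 1) * (g k 1 ::'a ncseries)"
    by (simp add: mult.assoc)
  also have "\<dots> \<approx> (if u = i then lower v 1 * g 1 1 else 0) * g k 1"
    by (rule congr_mult_right[OF g_upper]) (use assms in simp_all)
  also have "\<dots> = (if u = i then lower v 1 * g 1 1 * g k 1 else 0)" by simp
  also have "\<dots> \<approx> (if u = i then lower v k else 0)"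
    by (rule congr_if, rule lower_g_g) (use assms in simp_all)
  finally show ?thesis .
qed

lemma g_lower_g:
  assumes "row u" "col v" "col j" "col t"
  shows "g u v * (lower j 1 * g 1 t)
      \<approx> (if v = j then upper u t else (0::'a::field_char_0 ncseries))"
proof -
  have "g u v * (lower j 1 * g 1 t) = (g u v * lower j 1) * (g 1 t ::'a ncseries)"
    by (simp add: mult.assoc)
  also have "\<dots> \<approx> (if v = j then upper u 1 * g 1 1 else 0) * g 1 t"
    by (rule congr_mult_right[OF g_lower]) (use assms in simp_all)
  also have "\<dots> = (if v = j then upper u 1 * g 1 1 * g 1 t else 0)" by simp
  also have "\<dots> \<approx> (if v = j then upper u t else 0)"
    by (rule congr_if, rule upper_g_g) (use assms in simp_all)
  finally show ?thesis .
qed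

text \<open>The analogue of \<open>E(a, b)\<close>; within a diagonal block it is factored through the index
  \<open>p + 1\<close> resp. \<open>1\<close> of the other block.\<close>

definition munit :: "nat \<Rightarrow> nat \<Rightarrow> 'a::field_char_0 ncseries" where
  "munit a b = (if a \<le> p then (if b \<le> p then upper a 1 * g b 1 else upper a (b - p))
            else (if b \<le> p then lower (a - p) b else lower (a - p) 1 * g 1 (b - p)))"

lemma in_free_munit [simp]: "in_free (munit a b)"
  by (simp add: munit_def)

lemma g_munit:
  assumes "row u" "col v" "a \<in> {1..p+q}" "b \<in> {1..p+q}"
  shows "g u v * munit a b
      \<approx> (if a = p + v then munit u b else 0)
          + (if a = u then munit (p + v) b else (0::'a::field_char_0 ncseries))"
proof (cases "a \<le> p")
  case True
  note a = True
  show ?thesis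
  proof (cases "b \<le> p")
    case True
    have "g u v * munit a b = g u v * (upper a 1 * (g b 1 ::'a ncseries))"
      using a True by (simp add: munit_def)
    also have "\<dots> \<approx> (if u = a then lower v b else 0)"
      by (rule g_upper_g) (use assms a True in auto)
    finally show ?thesis using a True assms by (auto simp: munit_def)
  next
    case False
    have "g u v * munit a b = g u v * (upper a (b - p) ::'a ncseries)"
      using a False by (simp add: munit_def)
    also have "\<dots> \<approx> (if u = a then lower v 1 * g 1 (b - p) else 0)"
      by (rule g_upper) (use assms a False in auto)
    finally show ?thesis using a False assms by (auto simp: munit_def)
  qed
next
  case False
  note a = False
  show ?thesis
  proof (cases "b \<le> p")
    case True
    have "g u v * munit a b = g u v * (lower (a - p) b ::'a ncseries)"
      using a True by (simp add: munit_def)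
    also have "\<dots> \<approx> (if v = a - p then upper u 1 * g b 1 else 0)"
      by (rule g_lower) (use assms a True in auto)
    moreover have "(v = a - p) = (a = p + v)" using a by arith
    ultimately show ?thesis using a True assms by (auto simp: munit_def)
  next
    case False
    have "g u v * munit a b = g u v * (lower (a - p) 1 * (g 1 (b - p) ::'a ncseries))"
      using a False by (simp add: munit_def)
    also have "\<dots> \<approx> (if v = a - p then upper u (b - p) else 0)"
      by (rule g_lower_g) (use assms a False in auto)
    moreover have "(v = a - p) = (a = p + v)" using a by arith
    ultimately show ?thesis using a False assms by (auto simp: munit_def)
  qed
qed

lemma g_eq_munit_sum:
  assumes "row i" "col j"
  shows "g i j \<approx> munit i (p + j) + (munit (p + j) i :: 'a::field_char_0 ncseries)"
proof -
  have "munit i (p + j) + munit (p + j) i = upper i j + (lower j i ::'a ncseries)"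
    using assms by (simp add: munit_def)
  then show ?thesis using g_eq_upper_plus_lower[OF assms] by simp
qed

end

subsection \<open>The envelope is spanned by the matrix units\<close>

lemma fmul_G_indicator:
  "fmul (G i j) (\<lambda>u. if u = w then 1 else 0)
      = (\<lambda>u. if u = (i,j) # w then (1::'a::field) else 0)"
proof (rule ext)
  fix u :: "(nat \<times> nat) list"
  have summand: "G i j (take k u) * (if drop k u = w then 1 else 0) =
      (if k = 1 then (if u = (i,j) # w then (1::'a) else 0) else 0)" if "k \<le> length u" for k
  proof (cases "k = 1")
    case True
    then show ?thesis by (cases u) (auto simp: G_def)
  next
    case False
    then have "length (take k u) \<noteq> length [(i, j)]" using that by simp
    then have "take k u \<noteq> [(i, j)]" by metis
    then show ?thesis using False by (simp add: G_def)
  qed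
  have "fmul (G i j) (\<lambda>u. if u = w then 1 else 0) u =
      (\<Sum>k\<in>{0..length u}. if k = 1 then (if u = (i,j) # w then (1::'a) else 0) else 0)"
    unfolding fmul_def by (rule sum.cong[OF refl], rule summand) simp
  then show "fmul (G i j) (\<lambda>u. if u = w then 1 else 0) u
      = (if u = (i,j) # w then (1::'a) else 0)"
    by (auto simp: sum.delta')
qed

context rect_env
begin

abbreviation idx :: "nat set" where "idx \<equiv> {1..p+q}"

definition monomial :: "(nat \<times> nat) list \<Rightarrow> 'a::field_char_0 ncseries" where
  "monomial w = ncseries (\<lambda>u. if u = w then 1 else 0)"

lemma monomial_single: "row i \<Longrightarrow> col j \<Longrightarrow> monomial [(i,j)] = g i j"
  by (simp add: monomial_def g_def G_def)

lemma monomial_Cons: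
  assumes "row i" "col j"
  shows "monomial ((i,j) # w) = g i j * monomial w"
proof -
  have "ncoeff (g i j * monomial w) = ncoeff (monomial ((i,j) # w))"
    using assms by (simp add: ncoeff_mult ncoeff_g monomial_def fmul_G_indicator)
  then show ?thesis by (metis ncoeff_inject)
qed

lemma ncseries_eq_sum_monomials:
  assumes "finite {w. z w \<noteq> 0}"
  shows "ncseries z = (\<Sum>w | z w \<noteq> 0. scal (z w) * monomial w)"
proof -
  have "ncoeff (\<Sum>w | z w \<noteq> 0. scal (z w) * monomial w) u = z u" for u
  proof -
    have "ncoeff (\<Sum>w | z w \<noteq> 0. scal (z w) * monomial w) u =
        (\<Sum>w | z w \<noteq> 0. z w * (if u = w then 1 else 0))"
      by (simp add: ncoeff_sum ncoeff_scal_mult fsmult_def monomial_def)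
    also have "\<dots> = (\<Sum>w | z w \<noteq> 0. if u = w then z w else 0)"
      by (intro sum.cong refl) simp
    also have "\<dots> = z u" using assms by (simp add: sum.delta')
    finally show ?thesis .
  qed
  then have "ncoeff (ncseries z) = ncoeff (\<Sum>w | z w \<noteq> 0. scal (z w) * monomial w)"
    by (simp add: fun_eq_iff)
  then show ?thesis by (simp only: ncoeff_inject)
qed

lemma sum_sum_delta:
  assumes "x \<in> A" "y \<in> B" "finite A" "finite B"
  shows "(\<Sum>a\<in>A. \<Sum>b\<in>B. if a = x \<and> b = y then F a b else (0::'b::comm_monoid_add))
      = F x y"
proof -
  have "(\<Sum>b\<in>B. if a = x \<and> b = y then F a b else 0)
      = (if a = x then F a y else 0)" for a
  proof -
    have "(\<Sum>b\<in>B. if a = x \<and> b = y then F a b else 0) =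
        (\<Sum>b\<in>B. if b = y then (if a = x then F a y else 0) else 0)"
      by (intro sum.cong refl) auto
    then show ?thesis using assms by (simp add: sum.delta)
  qed
  then show ?thesis using assms by (simp add: sum.delta)
qed

lemma rep_ncoeff_mult:
  "in_free x \<Longrightarrow> in_free y \<Longrightarrow> rep p (ncoeff (x * y)) v
      = rep p (ncoeff x) (rep p (ncoeff y) v)"
  by (simp add: in_free_def ncoeff_mult rep_fmul freealg_finite_support)

lemma rep_ncoeff_g: "row i \<Longrightarrow> col j \<Longrightarrow> rep p (ncoeff (g i j)) v
    = rep_gen p (i, j) v"
  by (simp add: ncoeff_g rep_G)

lemma rep_munit:
  assumes "a \<in> idx" "b \<in> idx"
  shows "rep p (ncoeff (munit b a :: 'a::field_char_0 ncseries)) v c = (if c = b then v a else 0)"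
proof -
  have other_col_shift: "p + other_col (n - p) \<noteq> n" for n
    using other_col_neq(1)[of "n - p"] by (cases "n \<le> p") (auto simp: other_col_def)
  consider "b \<le> p" "a \<le> p" | "b \<le> p" "\<not> a \<le> p" | "\<not> b \<le> p" "a \<le> p" | "\<not> b \<le> p" "\<not> a \<le> p"
    by blast
  then show ?thesis
  proof cases
    case 1
    then show ?thesis using assms
      by (simp add: munit_def upper_def sq_def rep_ncoeff_mult rep_ncoeff_g) (auto simp: rep_gen_def)
  next
    case 2
    then have "col (a - p)" using assms by auto
    with 2 show ?thesis using assms other_col_shift[of a]
      by (simp add: munit_def upper_def sq_def rep_ncoeff_mult rep_ncoeff_g) (auto simp: rep_gen_def)
  next
    case 3
    then have "col (b - p)" using assms by auto
    with 3 show ?thesis using assms other_col_shift[of b]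
      by (simp add: munit_def lower_def sq_def rep_ncoeff_mult rep_ncoeff_g) (auto simp: rep_gen_def)
  next
    case 4
    then have "col (a - p)" "col (b - p)" using assms by auto
    with 4 show ?thesis using assms other_col_shift[of a] other_col_shift[of b]
      by (simp add: munit_def lower_def sq_def rep_ncoeff_mult rep_ncoeff_g) (auto simp: rep_gen_def)
  qed
qed

lemma g_eq_munit_expansion:
  assumes "row u" "col v"
  shows "g u v \<approx> (\<Sum>a\<in>idx. \<Sum>b\<in>idx. scal (rep_gen p (u, v) (basis_vec b) a) * munit a b)"
proof -
  have uv: "u \<in> idx" "p + v \<in> idx" "u \<noteq> p + v" using assms by auto
  have "g u v \<approx> munit u (p + v) + (munit (p + v) u :: 'a::field_char_0 ncseries)"
    by (rule g_eq_munit_sum) (use assms in auto)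
  also have "\<dots> = (\<Sum>a\<in>idx. \<Sum>b\<in>idx. if a = u \<and> b = p + v then munit a b else 0) +
                  (\<Sum>a\<in>idx. \<Sum>b\<in>idx. if a = p + v \<and> b = u then munit a b else 0)"
    by (simp only: sum_sum_delta[OF uv(1) uv(2)] sum_sum_delta[OF uv(2) uv(1)] finite_atLeastAtMost)
  also have "\<dots> = (\<Sum>a\<in>idx. \<Sum>b\<in>idx. scal (rep_gen p (u, v) (basis_vec b) a) * munit a b)"
    unfolding sum.distrib[symmetric] using uv
    by (intro sum.cong refl) (auto simp: rep_gen_def basis_vec_def scal_one scal_zero)
  finally show ?thesis .
qed

lemma g_mult_munit_expansion:
  assumes "row u" "col v"
  shows "g u v * (\<Sum>a\<in>idx. \<Sum>b\<in>idx. scal (M a b) * munit a b) \<approx>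
    (\<Sum>a\<in>idx. \<Sum>b\<in>idx. scal (rep_gen p (u, v) (\<lambda>c. M c b) a) * (munit a b :: 'a::field_char_0 ncseries))"
proof -
  have uv: "u \<in> idx" "p + v \<in> idx" "u \<noteq> p + v" using assms by auto
  have if_sum_const: "(\<Sum>b\<in>B. if P then F b else 0)
      = (if P then (\<Sum>b\<in>B. F b) else 0)"
    for P and B :: "nat set" and F :: "nat \<Rightarrow> 'a ncseries"
    by simp
  have sum_delta_const: "(\<Sum>a\<in>idx. if a = x then C else 0)
      = C" if "x \<in> idx" for x and C :: "'a ncseries"
    using that by (simp add: sum.delta')
  define A where "A b = scal (M (p + v) b) * (munit u b :: 'a ncseries)" for b
  define B where "B b = scal (M u b) * (munit (p + v) b :: 'a ncseries)" for b
  have distrib: "g u v * (\<Sum>a\<in>idx. \<Sum>b\<in>idx. scal (M a b) * munit a b) =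
      (\<Sum>a\<in>idx. \<Sum>b\<in>idx. scal (M a b) * (g u v * munit a b))"
    by (simp only: sum_distrib_left mult_scal_left_commute)
  have reduce: "(\<Sum>a\<in>idx. \<Sum>b\<in>idx. scal (M a b) * (g u v * munit a b)) \<approx>
      (\<Sum>a\<in>idx. \<Sum>b\<in>idx. scal (M a b) *
        ((if a = p + v then munit u b else 0) + (if a = u then munit (p + v) b else 0)))"
    by (intro congr_sum congr_scal g_munit) (use assms in auto)
  have "(\<Sum>a\<in>idx. \<Sum>b\<in>idx. scal (M a b) *
        ((if a = p + v then munit u b else 0) + (if a = u then munit (p + v) b else 0))) =
      (\<Sum>a\<in>idx. \<Sum>b\<in>idx. (if a = p + v then A b else 0) + (if a = u then B b else 0))"
    by (intro sum.cong refl) (auto simp: A_def B_def distrib_left)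
  also have "\<dots> = (\<Sum>b\<in>idx. A b) + (\<Sum>b\<in>idx. B b)"
    using uv by (simp only: sum.distrib if_sum_const sum_delta_const add.commute)
  also have "\<dots> = (\<Sum>a\<in>idx. \<Sum>b\<in>idx. (if a = u then A b else 0) + (if a = p + v then B b else 0))"
    using uv by (simp only: sum.distrib if_sum_const sum_delta_const)
  also have "\<dots> = (\<Sum>a\<in>idx. \<Sum>b\<in>idx. scal (rep_gen p (u, v) (\<lambda>c. M c b) a) * munit a b)"
    using uv by (intro sum.cong refl) (auto simp: A_def B_def rep_gen_def scal_zero)
  finally have regroup: "(\<Sum>a\<in>idx. \<Sum>b\<in>idx. scal (M a b) *
        ((if a = p + v then munit u b else 0) + (if a = u then munit (p + v) b else 0))) =
      (\<Sum>a\<in>idx. \<Sum>b\<in>idx. scal (rep_gen p (u, v) (\<lambda>c. M c b) a) * munit a b)" .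
  show ?thesis using reduce unfolding distrib regroup .
qed

lemma monomial_eq_munit_expansion:
  assumes "w \<noteq> []" "set w \<subseteq> gens p q"
  shows "monomial w \<approx>
    (\<Sum>a\<in>idx. \<Sum>b\<in>idx. scal (rep_word p w (basis_vec b) a) * (munit a b :: 'a::field_char_0 ncseries))"
  using assms
proof (induction w)
  case Nil
  then show ?case by simp
next
  case (Cons x w)
  obtain u v where x: "x = (u, v)" and uv: "row u" "col v"
    using Cons.prems by (cases x) (auto simp: gens_def)
  show ?case
  proof (cases "w = []")
    case True
    then show ?thesis using g_eq_munit_expansion[OF uv] by (simp add: x monomial_single[OF uv])
  next
    case False
    have "monomial (x # w) = g u v * monomial w" by (simp add: x monomial_Cons[OF uv])
    also have "\<dots> \<approx> g u v * (\<Sum>a\<in>idx. \<Sum>b\<in>idx. scal (rep_word p w (basis_vec b) a) * (munit a b :: 'a ncseries))"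
      by (rule congr_mult_left) (use Cons False in simp_all)
    also have "\<dots> \<approx> (\<Sum>a\<in>idx. \<Sum>b\<in>idx. scal (rep_word p (x # w) (basis_vec b) a) * munit a b)"
      using g_mult_munit_expansion[OF uv] by (simp add: x)
    finally show ?thesis .
  qed
qed

lemma congr_munit_expansion:
  assumes "z \<in> freealg p q"
  shows "ncseries z \<approx> (\<Sum>a\<in>idx. \<Sum>b\<in>idx. scal (rep p z (basis_vec b) a) * (munit a b :: 'a::field_char_0 ncseries))"
proof -
  define S where "S = {w. z w \<noteq> 0}"
  have fin: "finite S" using assms by (simp add: S_def freealg_finite_support)
  have words: "w \<noteq> [] \<and> set w \<subseteq> gens p q" if "w \<in> S" for w
    using assms that unfolding S_def freealg_def by auto
  have "ncseries z = (\<Sum>w\<in>S. scal (z w) * monomial w)"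
    unfolding S_def by (rule ncseries_eq_sum_monomials) (use fin in \<open>simp add: S_def\<close>)
  also have "\<dots> \<approx> (\<Sum>w\<in>S. scal (z w) *
      (\<Sum>a\<in>idx. \<Sum>b\<in>idx. scal (rep_word p w (basis_vec b) a) * munit a b))"
    by (intro congr_sum congr_scal monomial_eq_munit_expansion) (use words in auto)
  also have "\<dots> = (\<Sum>w\<in>S. \<Sum>a\<in>idx. \<Sum>b\<in>idx. scal (z w * rep_word p w (basis_vec b) a) * munit a b)"
    by (simp add: sum_distrib_left scal_mult mult.assoc)
  also have "\<dots> = (\<Sum>a\<in>idx. \<Sum>b\<in>idx. \<Sum>w\<in>S. scal (z w * rep_word p w (basis_vec b) a) * munit a b)"
    by (subst sum.swap) (intro sum.cong refl sum.swap)
  also have "\<dots> = (\<Sum>a\<in>idx. \<Sum>b\<in>idx. scal (rep p z (basis_vec b) a) * munit a b)"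
    by (simp add: sum_distrib_right scal_sum rep_def S_def)
  finally show ?thesis .
qed

end

subsection \<open>Semisimplicity\<close>

lemma not_quasi_regular_if_rep_fixes_coord:
  assumes "y \<in> freealg p q" "w \<in> freealg p q" "\<And>v. rep p y v a = v a"
  shows "fsub (fadd y w) (fmul y w) \<notin> envideal p q"
proof
  have fin: "finite {u. f u \<noteq> 0}" if "f \<in> freealg p q" for f :: "_ \<Rightarrow> 'a"
    using that by (rule freealg_finite_support)
  assume "fsub (fadd y w) (fmul y w) \<in> envideal p q"
  then have "rep p (fsub (fadd y w) (fmul y w)) (basis_vec a) a = 0"
    by (rule rep_envideal)
  moreover have "rep p (fsub (fadd y w) (fmul y w)) (basis_vec a) a =
      rep p y (basis_vec a) a + rep p w (basis_vec a) a - rep p y (rep p w (basis_vec a)) a"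
    using assms(1,2) by (simp add: rep_fsub rep_fadd rep_fmul fin freealg_fadd freealg_fmul)
  ultimately show False
    using assms(3) by (simp add: basis_vec_def)
qed

context rect_env
begin

lemma radical_rep_coeff_zero:
  assumes z: "z \<in> freealg p q" and rad: "in_quot_radical p q (envideal p q) z"
    and ab: "a \<in> idx" "b \<in> idx"
  shows "rep p z (basis_vec b) a = (0::'a::field_char_0)"
proof (rule ccontr)
  define l where "l = rep p z (basis_vec b) a"
  assume "rep p z (basis_vec b) a \<noteq> 0"
  then have "l \<noteq> 0" by (simp add: l_def)
  define y where "y = ncoeff (scal (1 / l) * (munit b a :: 'a ncseries))"
  have y: "y \<in> freealg p q"
    unfolding y_def by (simp flip: in_free_def)
  have "rep p (fmul z y) v a = v a" for v
  proof -
    have "finite {w. ncoeff (munit b a :: 'a ncseries) w \<noteq> 0}"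
      using in_free_munit[of b a] unfolding in_free_def by (rule freealg_finite_support)
    then have "rep p y v c = (1 / l) * (if c = b then v a else 0)" for c
      unfolding y_def ncoeff_scal_mult by (simp only: rep_fsmult rep_munit[OF ab])
    then have "rep p y v = (\<lambda>c. (v a / l) * basis_vec b c)"
      by (simp add: basis_vec_def fun_eq_iff)
    then have "rep p (fmul z y) v a = (v a / l) * rep p z (basis_vec b) a"
      using z y by (simp only: rep_fmul freealg_finite_support rep_scale_vec)
    then show ?thesis using \<open>l \<noteq> 0\<close> by (simp add: l_def)
  qed
  moreover obtain w where "w \<in> freealg p q"
    and "fsub (fadd (fmul z y) w) (fmul (fmul z y) w) \<in> envideal p q"
    using rad y unfolding in_quot_radical_def by blast
  ultimately show False
    using not_quasi_regular_if_rep_fixes_coord freealg_fmul[OF z y] by blast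
qed

end

theorem corollary3p2:
  fixes p q :: nat
  assumes "p > 1" and "q > 1" and "p \<noteq> q"
  shows "universal_envelope_semisimple TYPE('a::field_char_0) p q"
proof -
  interpret rect_env p q using assms by unfold_locales auto
  show ?thesis
    unfolding universal_envelope_semisimple_def quot_semisimple_def
  proof (intro ballI impI)
    fix z :: "(nat \<times> nat) list \<Rightarrow> 'a"
    assume z: "z \<in> freealg p q" and rad: "in_quot_radical p q (envideal p q) z"
    have "ncseries z \<approx> (\<Sum>a\<in>idx. \<Sum>b\<in>idx. scal (rep p z (basis_vec b) a) * munit a b)"
      by (rule congr_munit_expansion[OF z])
    also have "\<dots> = 0"
      using radical_rep_coeff_zero[OF z rad] by (simp add: scal_zero)
    finally show "z \<in> envideal p q"
      by (simp add: congr_def in_ideal_def)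
  qed
qed

end
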